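(* Let $N\geq 1$ and let $\mathcal{H}_{X_1},\dots,\mathcal{H}_{X_N}$ be finite-dimensional Hilbert spaces. Let $\rho=|V\rangle\langle V|$ be a pure state (unit vector $|V\rangle$) on $\mathcal{H}_{X_1}\otimes\cdots\otimes\mathcal{H}_{X_N}$ such that $H(X_1)_\rho\neq 0$ and $$I(X_1:X_i)_\rho=0\quad\text{for all } i=2,\dots,N.$$ Then $$\sum_{i=1}^N H(X_i)_\rho>1.$$
   Context: For a density operator $\sigma$ (positive semidefinite, trace one), its von Neumann entropy is $-\mathrm{Tr}[\sigma\log\sigma]=-\sum_i\lambda_i\log\lambda_i$ where $\lambda_i$ are the eigenvalues of $\sigma$ and $\log$ is the binary logarithm (with $0\log 0=0$). For a subset $\mathcal{X}$ of the systems $\{X_1,\dots,X_N\}$, $\rho_{\mathcal{X}}$ is the reduced state obtained by taking the partial trace of $\rho$ over the tensor factors not in $\mathcal{X}$, and $H(\mathcal{X})_\rho$ denotes the von Neumann entropy of $\rho_{\mathcal{X}}$ (e.g. $H(X_iX_j)_\rho$ is the entropy of $\rho_{X_iX_j}$). The quantum mutual information is $I(X_i:X_j)_\rho=H(X_i)_\rho+H(X_j)_\rho-H(X_iX_j)_\rho$. *)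

theory Defs
  imports Complex_Main "Jordan_Normal_Form.Spectral_Radius"
begin

text \<open>Sites X_1,...,X_N are numbered 0,...,N-1; site k has dimension d k.
  A basis vector of the tensor product H_{X_1} (x) ... (x) H_{X_N} is encoded by a
  natural number n < prod d (mixed radix, site 0 least significant);
  its k-th digit is the basis index in H_{X_(k+1)}.\<close>

definition tdim :: "(nat \<Rightarrow> nat) \<Rightarrow> nat list \<Rightarrow> nat" where
  "tdim d S = (\<Prod>t<length S. d (S ! t))"

definition ldigit :: "(nat \<Rightarrow> nat) \<Rightarrow> nat list \<Rightarrow> nat \<Rightarrow> nat \<Rightarrow> nat" where
  "ldigit d S t a = (a div (\<Prod>u<t. d (S ! u))) mod d (S ! t)"

definition sites :: "nat \<Rightarrow> nat list" where
  "sites N = [0..<N]"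

text \<open>Reduced state rho_S = Tr_{complement of S} |V><V| on the subsystems listed in S
  (a list of distinct sites), as a matrix w.r.t. the product basis of those sites.\<close>
definition reduced :: "nat \<Rightarrow> (nat \<Rightarrow> nat) \<Rightarrow> (nat \<Rightarrow> complex) \<Rightarrow> nat list \<Rightarrow> complex mat" where
  "reduced N d V S = mat (tdim d S) (tdim d S) (\<lambda>(a, b).
     \<Sum>(n, m) \<in> {(n, m). n < tdim d (sites N) \<and> m < tdim d (sites N)
        \<and> (\<forall>k<N. k \<notin> set S \<longrightarrow> ldigit d (sites N) k n = ldigit d (sites N) k m)
        \<and> (\<forall>t<length S. ldigit d (sites N) (S ! t) n = ldigit d S t a
                       \<and> ldigit d (sites N) (S ! t) m = ldigit d S t b)}.
       V n * cnj (V m))"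

definition xlogx :: "real \<Rightarrow> real" where
  "xlogx x = (if x = 0 then 0 else x * log 2 x)"

definition vn_entropy :: "complex mat \<Rightarrow> real" where
  "vn_entropy A = - (\<Sum>e \<in> spectrum A. real (order e (char_poly A)) * xlogx (Re e))"

definition H :: "nat \<Rightarrow> (nat \<Rightarrow> nat) \<Rightarrow> (nat \<Rightarrow> complex) \<Rightarrow> nat list \<Rightarrow> real" where
  "H N d V S = vn_entropy (reduced N d V S)"

definition mutual_info :: "nat \<Rightarrow> (nat \<Rightarrow> nat) \<Rightarrow> (nat \<Rightarrow> complex) \<Rightarrow> nat \<Rightarrow> nat \<Rightarrow> real" where
  "mutual_info N d V i j = H N d V [i] + H N d V [j] - H N d V [i, j]"

end

theory Submission
  imports Defs
begin

(* Rotate every site into an eigenbasis of its one-site reduced state, so that the reduced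
   states become diagonal with the site marginals p_k of the rotated amplitudes as spectra.
   In the equality case of subadditivity (Klein's inequality, applied to a doubly stochastic
   mixing of the two-site spectrum), I(X_1:X_i) = 0 makes the joint distribution of sites 1
   and i the product p_1 p_i.  Since H(X_1) > 0, p_1 has two positive weights a, a'.  Let
   j_i be a most likely value at site i and e_i = 1 - p_i(j_i).  By the union bound the
   configuration (a, j_2, ..., j_N) carries weight at least p_1(a) (1 - sum e_i), and the same
   for a'; since the vectors indexed by a and a' are orthogonal (rho_1 is diagonal), Bessel's
   inequality gives 2 (1 - sum e_i) <= 1.  As H(X_i) >= min 1 (2 e_i), the sites 2..N
   contribute entropy at least 1, and H(X_1) > 0 makes the total exceed 1. *)

section \<open>Finite sums\<close>

lemma add_mult_less_mult: "a < m \<Longrightarrow> b < n \<Longrightarrow> a + m * b < m * (n::nat)"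
proof -
  assume "a < m" "b < n"
  moreover have "m + m * b \<le> m * n"
    using \<open>b < n\<close> by (metis Suc_leI mult_Suc_right mult_le_mono2)
  ultimately show ?thesis
    by linarith
qed

lemma mod_div_less_of_less_mult: "x < m * n \<Longrightarrow> x mod m < m \<and> x div m < (n::nat)"
  by (cases "m = 0") (auto simp: less_mult_imp_div_less mult.commute)

lemma sum_lessThan_mult_split:
  fixes f :: "nat \<Rightarrow> 'a::comm_monoid_add"
  shows "(\<Sum>x<m * n. f x) = (\<Sum>a<m. \<Sum>b<n. f (a + m * b))"
proof -
  have "bij_betw (\<lambda>(a, b). a + m * b) ({..<m} \<times> {..<n}) {..<m * n}"
  proof (rule bij_betw_imageI)
    show "inj_on (\<lambda>(a, b). a + m * b) ({..<m} \<times> {..<n})"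
    proof (rule inj_onI, clarsimp)
      fix a b a' b' assume a: "a < m" "a' < m" and eq: "a + m * b = a' + m * b'"
      from a have "(a + m * b) mod m = a" "(a' + m * b') mod m = a'"
        "(a + m * b) div m = b" "(a' + m * b') div m = b'"
        by auto
      then show "a = a' \<and> b = b'"
        using eq by metis
    qed
    show "(\<lambda>(a, b). a + m * b) ` ({..<m} \<times> {..<n}) = {..<m * n}"
    proof (intro equalityI subsetI)
      fix x assume "x \<in> {..<m * n}"
      then have x: "x mod m < m \<and> x div m < n"
        using mod_div_less_of_less_mult by auto
      show "x \<in> (\<lambda>(a, b). a + m * b) ` ({..<m} \<times> {..<n})"
        by (rule image_eqI[where x = "(x mod m, x div m)"]) (use x in simp_all)
    qed (auto simp: add_mult_less_mult)
  qed
  then show ?thesis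
    by (simp add: sum.reindex_bij_betw[symmetric] sum.cartesian_product split_def)
qed

lemma prod_indicator:
  "finite A \<Longrightarrow> (\<Prod>k\<in>A. if P k then 1 else (0::'a::comm_semiring_1)) = (if \<forall>k\<in>A. P k then 1 else 0)"
  by (induction A rule: finite_induct) auto

lemma sum_nested_delta:
  "finite S \<Longrightarrow> h \<in> S \<Longrightarrow> (\<Sum>h'\<in>S. \<Sum>g\<in>A. if h' = h then X g else 0) = (\<Sum>g\<in>A. X g)"
proof -
  assume "finite S" "h \<in> S"
  have "(\<Sum>h'\<in>S. \<Sum>g\<in>A. if h' = h then X g else 0) = (\<Sum>h'\<in>S. if h' = h then \<Sum>g\<in>A. X g else 0)"
    by (intro sum.cong refl) simp
  then show ?thesis
    using \<open>finite S\<close> \<open>h \<in> S\<close> by simp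
qed

lemma sum_sum_sum_factor:
  fixes l :: "'c \<Rightarrow> 'a::comm_semiring_0"
  shows "(\<Sum>x\<in>A. \<Sum>y\<in>B. \<Sum>c\<in>C. l c * g x c * h y c) = (\<Sum>c\<in>C. l c * (\<Sum>x\<in>A. g x c) * (\<Sum>y\<in>B. h y c))"
proof -
  have "(\<Sum>c\<in>C. l c * (\<Sum>x\<in>A. g x c) * (\<Sum>y\<in>B. h y c))
      = (\<Sum>c\<in>C. \<Sum>x\<in>A. \<Sum>y\<in>B. l c * g x c * h y c)"
  proof (rule sum.cong[OF refl])
    fix c
    have "l c * (\<Sum>x\<in>A. g x c) * (\<Sum>y\<in>B. h y c) = (\<Sum>x\<in>A. l c * g x c) * (\<Sum>y\<in>B. h y c)"
      by (simp add: sum_distrib_left)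
    then show "l c * (\<Sum>x\<in>A. g x c) * (\<Sum>y\<in>B. h y c) = (\<Sum>x\<in>A. \<Sum>y\<in>B. l c * g x c * h y c)"
      by (simp add: sum_product)
  qed
  also have "\<dots> = (\<Sum>x\<in>A. \<Sum>c\<in>C. \<Sum>y\<in>B. l c * g x c * h y c)"
    by (rule sum.swap)
  also have "\<dots> = (\<Sum>x\<in>A. \<Sum>y\<in>B. \<Sum>c\<in>C. l c * g x c * h y c)"
    by (intro sum.cong refl sum.swap)
  finally show ?thesis
    by simp
qed

section \<open>Matrices as functions and the spectral theorem\<close>

type_synonym fmat = "nat \<Rightarrow> nat \<Rightarrow> complex"

definition fm_mult :: "nat \<Rightarrow> fmat \<Rightarrow> fmat \<Rightarrow> fmat" where
  "fm_mult n X Y = (\<lambda>i j. \<Sum>k<n. X i k * Y k j)"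

definition fm_adj :: "fmat \<Rightarrow> fmat" where
  "fm_adj X = (\<lambda>i j. cnj (X j i))"

definition fm_one :: fmat where
  "fm_one = (\<lambda>i j. if i = j then 1 else 0)"

definition fm_diag :: "(nat \<Rightarrow> real) \<Rightarrow> fmat" where
  "fm_diag lam = (\<lambda>i j. if i = j then complex_of_real (lam i) else 0)"

definition fm_eq :: "nat \<Rightarrow> fmat \<Rightarrow> fmat \<Rightarrow> bool" where
  "fm_eq n X Y \<longleftrightarrow> (\<forall>i<n. \<forall>j<n. X i j = Y i j)"

definition fm_unitary :: "nat \<Rightarrow> fmat \<Rightarrow> bool" where
  "fm_unitary n U \<longleftrightarrow>
     fm_eq n (fm_mult n U (fm_adj U)) fm_one \<and> fm_eq n (fm_mult n (fm_adj U) U) fm_one"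

definition fm_hermitian :: "nat \<Rightarrow> fmat \<Rightarrow> bool" where
  "fm_hermitian n A \<longleftrightarrow> fm_eq n (fm_adj A) A"

definition fm_eigendecomp :: "nat \<Rightarrow> fmat \<Rightarrow> fmat \<Rightarrow> (nat \<Rightarrow> real) \<Rightarrow> bool" where
  "fm_eigendecomp n A U lam \<longleftrightarrow>
     fm_unitary n U \<and> fm_eq n A (fm_mult n (fm_mult n U (fm_diag lam)) (fm_adj U))"

lemma fm_mult_assoc: "fm_mult n (fm_mult n X Y) Z = fm_mult n X (fm_mult n Y Z)"
  unfolding fm_mult_def
  by (auto simp: sum_distrib_left sum_distrib_right mult.assoc intro!: ext sum.swap[THEN trans])

lemma fm_adj_mult: "fm_adj (fm_mult n X Y) = fm_mult n (fm_adj Y) (fm_adj X)"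
  unfolding fm_mult_def fm_adj_def by (auto intro!: ext simp: mult.commute)

lemma fm_adj_adj [simp]: "fm_adj (fm_adj X) = X"
  unfolding fm_adj_def by simp

lemma fm_eq_refl [simp]: "fm_eq n X X"
  unfolding fm_eq_def by simp

lemma fm_eq_sym: "fm_eq n X Y \<Longrightarrow> fm_eq n Y X"
  unfolding fm_eq_def by simp

lemma fm_eq_trans [trans]: "fm_eq n X Y \<Longrightarrow> fm_eq n Y Z \<Longrightarrow> fm_eq n X Z"
  unfolding fm_eq_def by simp

lemma fm_mult_cong: "fm_eq n X X' \<Longrightarrow> fm_eq n Y Y' \<Longrightarrow> fm_eq n (fm_mult n X Y) (fm_mult n X' Y')"
  unfolding fm_eq_def fm_mult_def by simp

lemma fm_mult_one_left: "fm_eq n (fm_mult n fm_one X) X"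
  unfolding fm_eq_def fm_mult_def fm_one_def by (simp add: if_distrib[of "\<lambda>x. x * _"] cong: if_cong)

lemma fm_mult_one_right: "fm_eq n (fm_mult n X fm_one) X"
  unfolding fm_eq_def fm_mult_def fm_one_def by (simp add: if_distrib[of "(*) _"] sum.delta' cong: if_cong)

lemma fm_mult_diag_adj:
  "fm_mult n (fm_mult n U (fm_diag lam)) (fm_adj U) i j
     = (\<Sum>k<n. U i k * complex_of_real (lam k) * cnj (U j k))"
proof -
  have "fm_mult n U (fm_diag lam) i k = (if k < n then U i k * complex_of_real (lam k) else 0)" for k
    unfolding fm_mult_def fm_diag_def by (auto simp: if_distrib[of "\<lambda>x. _ * x"] cong: if_cong)
  then show ?thesis
    unfolding fm_mult_def fm_adj_def by (intro sum.cong) auto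
qed

lemma fm_eigendecomp_iff:
  "fm_eigendecomp n A U lam \<longleftrightarrow> fm_unitary n U \<and>
     (\<forall>i<n. \<forall>j<n. A i j = (\<Sum>k<n. U i k * complex_of_real (lam k) * cnj (U j k)))"
  unfolding fm_eigendecomp_def fm_eq_def fm_mult_diag_adj ..

lemma fm_unitary_rows:
  "fm_unitary n U \<Longrightarrow> i < n \<Longrightarrow> j < n \<Longrightarrow> (\<Sum>k<n. U i k * cnj (U j k)) = fm_one i j"
  unfolding fm_unitary_def fm_eq_def fm_mult_def fm_adj_def by simp

lemma fm_unitary_cols:
  "fm_unitary n U \<Longrightarrow> i < n \<Longrightarrow> j < n \<Longrightarrow> (\<Sum>k<n. cnj (U k i) * U k j) = fm_one i j"
  unfolding fm_unitary_def fm_eq_def fm_mult_def fm_adj_def by simp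

lemma fm_unitaryI:
  assumes "\<And>i j. i < n \<Longrightarrow> j < n \<Longrightarrow> (\<Sum>k<n. U i k * cnj (U j k)) = fm_one i j"
    and "\<And>i j. i < n \<Longrightarrow> j < n \<Longrightarrow> (\<Sum>k<n. cnj (U k i) * U k j) = fm_one i j"
  shows "fm_unitary n U"
  using assms unfolding fm_unitary_def fm_eq_def fm_mult_def fm_adj_def by simp

lemma fm_unitary_adj: "fm_unitary n U \<Longrightarrow> fm_unitary n (fm_adj U)"
  unfolding fm_unitary_def by simp

lemma fm_unitary_mult:
  assumes X: "fm_unitary n X" and Y: "fm_unitary n Y"
  shows "fm_unitary n (fm_mult n X Y)"
proof -
  have "fm_eq n (fm_mult n (fm_mult n X Y) (fm_adj (fm_mult n X Y)))
      (fm_mult n X (fm_mult n (fm_mult n Y (fm_adj Y)) (fm_adj X)))"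
    by (simp add: fm_adj_mult fm_mult_assoc)
  also have "fm_eq n \<dots> (fm_mult n X (fm_mult n fm_one (fm_adj X)))"
    by (intro fm_mult_cong fm_eq_refl) (use Y in \<open>simp add: fm_unitary_def\<close>)
  also have "fm_eq n \<dots> (fm_mult n X (fm_adj X))"
    by (intro fm_mult_cong fm_mult_one_left) simp
  also have "fm_eq n \<dots> fm_one"
    using X unfolding fm_unitary_def by simp
  finally have 1: "fm_eq n (fm_mult n (fm_mult n X Y) (fm_adj (fm_mult n X Y))) fm_one" .
  have "fm_eq n (fm_mult n (fm_adj (fm_mult n X Y)) (fm_mult n X Y))
      (fm_mult n (fm_adj Y) (fm_mult n (fm_mult n (fm_adj X) X) Y))"
    by (simp add: fm_adj_mult fm_mult_assoc)
  also have "fm_eq n \<dots> (fm_mult n (fm_adj Y) (fm_mult n fm_one Y))"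
    by (intro fm_mult_cong fm_eq_refl) (use X in \<open>simp add: fm_unitary_def\<close>)
  also have "fm_eq n \<dots> (fm_mult n (fm_adj Y) Y)"
    by (intro fm_mult_cong fm_mult_one_left) simp
  also have "fm_eq n \<dots> fm_one"
    using Y unfolding fm_unitary_def by simp
  finally show ?thesis
    using 1 unfolding fm_unitary_def by simp
qed

lemma fm_unitary_conj_cancel:
  assumes "fm_unitary n V"
  shows "fm_eq n A (fm_mult n (fm_mult n V (fm_mult n (fm_adj V) (fm_mult n A V))) (fm_adj V))"
proof -
  have "fm_eq n (fm_mult n (fm_mult n V (fm_mult n (fm_adj V) (fm_mult n A V))) (fm_adj V))
      (fm_mult n (fm_mult n V (fm_adj V)) (fm_mult n A (fm_mult n V (fm_adj V))))"
    by (simp add: fm_mult_assoc)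
  also have "fm_eq n \<dots> (fm_mult n fm_one (fm_mult n A fm_one))"
    by (intro fm_mult_cong fm_eq_refl) (use assms in \<open>simp_all add: fm_unitary_def\<close>)
  also have "fm_eq n \<dots> (fm_mult n A fm_one)"
    by (rule fm_mult_one_left)
  also have "fm_eq n \<dots> A"
    by (rule fm_mult_one_right)
  finally show ?thesis
    by (rule fm_eq_sym)
qed

lemma fm_eigendecomp_conj:
  assumes B: "fm_eigendecomp n B U lam" and V: "fm_unitary n V"
    and A: "fm_eq n A (fm_mult n (fm_mult n V B) (fm_adj V))"
  shows "fm_eigendecomp n A (fm_mult n V U) lam"
proof -
  have "fm_eq n B (fm_mult n (fm_mult n U (fm_diag lam)) (fm_adj U))"
    using B unfolding fm_eigendecomp_def by simp
  then have "fm_eq n (fm_mult n (fm_mult n V B) (fm_adj V))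
      (fm_mult n (fm_mult n V (fm_mult n (fm_mult n U (fm_diag lam)) (fm_adj U))) (fm_adj V))"
    by (intro fm_mult_cong fm_eq_refl)
  also have "fm_eq n \<dots> (fm_mult n (fm_mult n (fm_mult n V U) (fm_diag lam)) (fm_adj (fm_mult n V U)))"
    by (simp add: fm_mult_assoc fm_adj_mult)
  finally have "fm_eq n A (fm_mult n (fm_mult n (fm_mult n V U) (fm_diag lam)) (fm_adj (fm_mult n V U)))"
    by (rule fm_eq_trans[OF A])
  moreover have "fm_unitary n (fm_mult n V U)"
    using B V fm_unitary_mult unfolding fm_eigendecomp_def by blast
  ultimately show ?thesis
    unfolding fm_eigendecomp_def by simp
qed

definition fm_kron :: "nat \<Rightarrow> fmat \<Rightarrow> fmat \<Rightarrow> fmat" where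
  "fm_kron m A B = (\<lambda>x y. A (x mod m) (y mod m) * B (x div m) (y div m))"

lemma fm_unitary_kron:
  assumes A: "fm_unitary m A" and B: "fm_unitary n B" and m: "m > 0"
  shows "fm_unitary (m * n) (fm_kron m A B)"
proof -
  note xs = mod_div_less_of_less_mult[of _ m n]
  have one: "fm_one (x mod m) (y mod m) * fm_one (x div m) (y div m) = fm_one x y" for x y
  proof -
    have "x = y \<longleftrightarrow> x mod m = y mod m \<and> x div m = y div m"
      by (metis div_mult_mod_eq)
    then show ?thesis
      unfolding fm_one_def by auto
  qed
  show ?thesis
  proof (rule fm_unitaryI)
    fix x y assume xy: "x < m * n" "y < m * n"
    have "(\<Sum>k<m * n. fm_kron m A B x k * cnj (fm_kron m A B y k))
        = (\<Sum>a<m. \<Sum>b<n. (A (x mod m) a * cnj (A (y mod m) a)) * (B (x div m) b * cnj (B (y div m) b)))"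
      unfolding fm_kron_def sum_lessThan_mult_split by (intro sum.cong refl) (simp add: mult_ac)
    also have "\<dots> = fm_one (x mod m) (y mod m) * fm_one (x div m) (y div m)"
      using xy xs fm_unitary_rows[OF A] fm_unitary_rows[OF B] by (simp add: sum_product[symmetric])
    finally show "(\<Sum>k<m * n. fm_kron m A B x k * cnj (fm_kron m A B y k)) = fm_one x y"
      unfolding one .
  next
    fix x y assume xy: "x < m * n" "y < m * n"
    have "(\<Sum>k<m * n. cnj (fm_kron m A B k x) * fm_kron m A B k y)
        = (\<Sum>a<m. \<Sum>b<n. (cnj (A a (x mod m)) * A a (y mod m)) * (cnj (B b (x div m)) * B b (y div m)))"
      unfolding fm_kron_def sum_lessThan_mult_split by (intro sum.cong refl) (simp add: mult_ac)
    also have "\<dots> = fm_one (x mod m) (y mod m) * fm_one (x div m) (y div m)"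
      using xy xs fm_unitary_cols[OF A] fm_unitary_cols[OF B] by (simp add: sum_product[symmetric])
    finally show "(\<Sum>k<m * n. cnj (fm_kron m A B k x) * fm_kron m A B k y) = fm_one x y"
      unfolding one .
  qed
qed

lemma unit_eigenvector_exists:
  fixes A :: fmat
  assumes "n > 0"
  shows "\<exists>u e. (\<Sum>i<n. (cmod (u i))\<^sup>2) = 1 \<and> (\<forall>i<n. (\<Sum>j<n. A i j * u j) = e * u i)"
proof -
  define M where "M = mat n n (\<lambda>(i, j). A i j)"
  have M: "M \<in> carrier_mat n n"
    unfolding M_def by simp
  obtain e where "e \<in> spectrum M"
    using spectrum_non_empty[OF M assms] by blast
  then obtain v where v: "v \<in> carrier_vec n" "v \<noteq> 0\<^sub>v n" and Mv: "M *\<^sub>v v = e \<cdot>\<^sub>v v"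
    using M unfolding spectrum_def eigenvalue_def eigenvector_def by auto
  have Av: "(\<Sum>j<n. A i j * v $ j) = e * v $ i" if "i < n" for i
  proof -
    have "(M *\<^sub>v v) $ i = (\<Sum>j<n. A i j * v $ j)"
      using that v unfolding M_def by (auto simp: scalar_prod_def lessThan_atLeast0)
    then show ?thesis
      using Mv that v by simp
  qed
  define s where "s = (\<Sum>i<n. (cmod (v $ i))\<^sup>2)"
  obtain k where k: "k < n" "v $ k \<noteq> 0"
    using v by (metis eq_vecI index_zero_vec(1,2) carrier_vecD)
  have "(cmod (v $ k))\<^sup>2 \<le> s"
    unfolding s_def using k by (intro member_le_sum) auto
  then have s: "s > 0"
    using k by (smt (verit) zero_less_power2 zero_less_norm_iff)
  define u where "u i = v $ i / complex_of_real (sqrt s)" for i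
  have "(\<Sum>i<n. (cmod (u i))\<^sup>2) = (\<Sum>i<n. (cmod (v $ i))\<^sup>2) / s"
    unfolding u_def using s by (simp add: norm_divide power_divide sum_divide_distrib)
  moreover have "(\<Sum>j<n. A i j * u j) = e * u i" if "i < n" for i
    using Av[OF that] unfolding u_def by (simp add: sum_divide_distrib[symmetric] times_divide_eq_right)
  ultimately show ?thesis
    using s unfolding s_def by auto
qed

lemma fm_reflection_square:
  assumes "(\<Sum>k<n. b k * a k) = 2"
  shows "fm_eq n (fm_mult n (\<lambda>i j. fm_one i j - a i * b j) (\<lambda>i j. fm_one i j - a i * b j)) fm_one"
  unfolding fm_eq_def
proof (intro allI impI)
  fix i j assume ij: "i < n" "j < n"
  have "(\<Sum>k<n. (fm_one i k - a i * b k) * (fm_one k j - a k * b j))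
      = (\<Sum>k<n. fm_one i k * fm_one k j) - (\<Sum>k<n. fm_one i k * a k) * b j
        - a i * (\<Sum>k<n. b k * fm_one k j) + a i * b j * (\<Sum>k<n. b k * a k)"
    by (simp add: algebra_simps sum.distrib sum_subtractf sum_distrib_left sum_distrib_right)
  also have "\<dots> = fm_one i j"
    using ij assms by (simp add: fm_one_def if_distrib[of "\<lambda>x. x * _"] if_distrib[of "(*) _"] cong: if_cong)
  finally show "fm_mult n (\<lambda>i j. fm_one i j - a i * b j) (\<lambda>i j. fm_one i j - a i * b j) i j = fm_one i j"
    unfolding fm_mult_def .
qed

lemma fm_unitary_one: "fm_unitary n fm_one"
  by (rule fm_unitaryI) (simp_all add: fm_one_def if_distrib[of "\<lambda>x. x * _"] if_distrib[of cnj] cong: if_cong)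

lemma fm_reflection_unitary:
  fixes w :: "nat \<Rightarrow> complex" and m :: nat
  defines "nw \<equiv> \<Sum>k<m. (cmod (w k))\<^sup>2"
  assumes "nw \<noteq> 0"
  shows "fm_unitary m (\<lambda>i j. fm_one i j - w i * (2 * cnj (w j) / complex_of_real nw))"
    (is "fm_unitary m ?Q")
proof -
  have "(\<Sum>k<m. 2 * cnj (w k) / complex_of_real nw * w k)
      = 2 * (\<Sum>k<m. complex_of_real ((cmod (w k))\<^sup>2)) / complex_of_real nw"
    by (simp add: complex_norm_square sum_distrib_left sum_divide_distrib mult_ac del: of_real_power)
  also have "\<dots> = 2"
    using assms unfolding of_real_sum[symmetric] by (metis nonzero_mult_div_cancel_right of_real_eq_0_iff)
  finally have "fm_eq m (fm_mult m ?Q ?Q) fm_one"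
    by (rule fm_reflection_square)
  moreover have "fm_adj ?Q = ?Q"
    unfolding fm_adj_def fm_one_def by (auto intro!: ext)
  ultimately show ?thesis
    unfolding fm_unitary_def by simp
qed

text \<open>A Householder reflection maps the first basis vector to a unimodular multiple of u.\<close>

lemma unitary_with_first_column:
  assumes m: "m > 0" and u: "(\<Sum>i<m. (cmod (u i))\<^sup>2) = 1"
  shows "\<exists>Q c. fm_unitary m Q \<and> (\<forall>i<m. Q i 0 = c * u i)"
proof -
  define c where "c = (if u 0 = 0 then 1 else cnj (u 0) / complex_of_real (cmod (u 0)))"
  have cu0: "c * u 0 = complex_of_real (cmod (u 0))"
    unfolding c_def by (auto simp: complex_norm_square[symmetric] power2_eq_square mult.commute)
  have cc: "c * cnj c = 1"
    unfolding c_def by (auto simp: complex_norm_square[symmetric] power2_eq_square norm_divide)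
  define w where "w i = fm_one i 0 - c * u i" for i
  define nw where "nw = (\<Sum>k<m. (cmod (w k))\<^sup>2)"
  have "complex_of_real nw = (\<Sum>k<m. (if k = 0 then 1 - cnj (c * u k) - c * u k else 0)
      + complex_of_real ((cmod (u k))\<^sup>2))"
  proof -
    have "c * u k * (cnj c * cnj (u k)) = u k * cnj (u k)" for k
      using cc by (metis mult.assoc mult.left_commute mult_1)
    then show ?thesis
      unfolding nw_def w_def of_real_sum complex_norm_square
      by (intro sum.cong) (auto simp: fm_one_def algebra_simps)
  qed
  also have "\<dots> = 2 - cnj (c * u 0) - c * u 0"
    using m u by (simp add: sum.distrib del: of_real_power flip: of_real_sum)
  finally have "complex_of_real nw = 2 * cnj (w 0)"
    unfolding w_def fm_one_def cu0 by simp
  show ?thesis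
  proof (cases "nw = 0")
    case True
    have "w i = 0" if "i < m" for i
      using True that unfolding nw_def by (simp add: sum_nonneg_eq_0_iff)
    then have "fm_one i 0 = c * u i" if "i < m" for i
      using that unfolding w_def by (metis right_minus_eq)
    then show ?thesis
      using fm_unitary_one by blast
  next
    case False
    then have "2 * cnj (w 0) / complex_of_real nw = 1"
      using \<open>complex_of_real nw = 2 * cnj (w 0)\<close> by (metis divide_self of_real_eq_0_iff)
    then have "fm_one i 0 - w i * (2 * cnj (w 0) / complex_of_real nw) = c * u i" for i
      by (simp add: w_def)
    then show ?thesis
      using fm_reflection_unitary[of w m] False unfolding nw_def by blast
  qed
qed

definition fm_extend :: "fmat \<Rightarrow> fmat" where
  "fm_extend U = (\<lambda>i j. if i = 0 \<and> j = 0 then 1 else if i = 0 \<or> j = 0 then 0 else U (i - 1) (j - 1))"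

lemma fm_unitary_extend:
  assumes U: "fm_unitary n U"
  shows "fm_unitary (Suc n) (fm_extend U)"
  unfolding fm_extend_def
proof (rule fm_unitaryI)
  fix i j assume ij: "i < Suc n" "j < Suc n"
  show "(\<Sum>k<Suc n. (if i = 0 \<and> k = 0 then 1 else if i = 0 \<or> k = 0 then 0 else U (i - 1) (k - 1)) *
      cnj (if j = 0 \<and> k = 0 then 1 else if j = 0 \<or> k = 0 then 0 else U (j - 1) (k - 1))) = fm_one i j"
  proof (cases "i = 0 \<or> j = 0")
    case False
    then obtain i' j' where "i = Suc i'" "j = Suc j'" "i' < n" "j' < n"
      using ij by (metis Suc_less_SucD not0_implies_Suc)
    then show ?thesis
      unfolding sum.lessThan_Suc_shift using fm_unitary_rows[OF U] by (simp add: fm_one_def)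
  qed (unfold sum.lessThan_Suc_shift, auto simp: fm_one_def)
  show "(\<Sum>k<Suc n. cnj (if k = 0 \<and> i = 0 then 1 else if k = 0 \<or> i = 0 then 0 else U (k - 1) (i - 1)) *
      (if k = 0 \<and> j = 0 then 1 else if k = 0 \<or> j = 0 then 0 else U (k - 1) (j - 1))) = fm_one i j"
  proof (cases "i = 0 \<or> j = 0")
    case False
    then obtain i' j' where "i = Suc i'" "j = Suc j'" "i' < n" "j' < n"
      using ij by (metis Suc_less_SucD not0_implies_Suc)
    then show ?thesis
      unfolding sum.lessThan_Suc_shift using fm_unitary_cols[OF U] by (simp add: fm_one_def)
  qed (unfold sum.lessThan_Suc_shift, auto simp: fm_one_def)
qed

lemma fm_hermitian_deflate:
  assumes A: "fm_hermitian m A" and Q: "fm_unitary m Q" and col: "\<forall>i<m. Q i 0 = c * u i"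
    and eig: "\<forall>i<m. (\<Sum>j<m. A i j * u j) = e * u i" and m: "m > 0"
  defines "A' \<equiv> fm_mult m (fm_adj Q) (fm_mult m A Q)"
  shows "fm_hermitian m A'" and "cnj e = e"
    and "\<forall>i<m. A' i 0 = fm_one i 0 * e \<and> A' 0 i = fm_one i 0 * e"
proof -
  have "fm_eq m (fm_adj A') (fm_mult m (fm_mult m (fm_adj Q) (fm_adj A)) Q)"
    unfolding A'_def by (simp add: fm_adj_mult)
  also have "fm_eq m \<dots> (fm_mult m (fm_mult m (fm_adj Q) A) Q)"
    by (intro fm_mult_cong fm_eq_refl) (use A in \<open>simp add: fm_hermitian_def\<close>)
  also have "fm_eq m \<dots> A'"
    unfolding A'_def by (simp add: fm_mult_assoc)
  finally show herm: "fm_hermitian m A'"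
    unfolding fm_hermitian_def .
  have AH: "fm_mult m A Q k 0 = e * Q k 0" if "k < m" for k
  proof -
    have "fm_mult m A Q k 0 = c * (\<Sum>j<m. A k j * u j)"
      unfolding fm_mult_def using col by (simp add: sum_distrib_left mult_ac)
    then show ?thesis
      using eig col that by simp
  qed
  have col0: "A' i 0 = fm_one i 0 * e" if "i < m" for i
  proof -
    have "A' i 0 = e * fm_mult m (fm_adj Q) Q i 0"
      unfolding A'_def fm_mult_def[of m "fm_adj Q" "fm_mult m A Q"] using AH
      by (simp add: fm_mult_def sum_distrib_left mult_ac)
    then show ?thesis
      using Q that m unfolding fm_unitary_def fm_eq_def by simp
  qed
  have row0: "A' 0 i = cnj (A' i 0)" if "i < m" for i
    using herm that m unfolding fm_hermitian_def fm_eq_def fm_adj_def by (metis complex_cnj_cnj)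
  show "cnj e = e"
    using row0[OF m] col0[OF m] by (simp add: fm_one_def)
  then show "\<forall>i<m. A' i 0 = fm_one i 0 * e \<and> A' 0 i = fm_one i 0 * e"
    using col0 row0 by (simp add: fm_one_def)
qed

lemma fm_eigendecomp_extend:
  assumes border: "\<forall>i<Suc n. A i 0 = fm_one i 0 * e \<and> A 0 i = fm_one i 0 * e" and e: "cnj e = e"
    and dec: "fm_eigendecomp n (\<lambda>i j. A (Suc i) (Suc j)) U lam"
  shows "fm_eigendecomp (Suc n) A (fm_extend U) (\<lambda>k. if k = 0 then Re e else lam (k - 1))"
  unfolding fm_eigendecomp_iff
proof (intro conjI allI impI)
  show "fm_unitary (Suc n) (fm_extend U)"
    using dec fm_unitary_extend unfolding fm_eigendecomp_def by blast
  fix i j assume ij: "i < Suc n" "j < Suc n"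
  show "A i j = (\<Sum>k<Suc n. fm_extend U i k * complex_of_real (if k = 0 then Re e else lam (k - 1)) *
      cnj (fm_extend U j k))"
  proof (cases "i = 0 \<or> j = 0")
    case True
    have "e = complex_of_real (Re e)"
      using e by (simp add: complex_eq_iff)
    then show ?thesis
      unfolding sum.lessThan_Suc_shift using True border ij by (auto simp: fm_one_def fm_extend_def)
  next
    case False
    then obtain i' j' where "i = Suc i'" "j = Suc j'" "i' < n" "j' < n"
      using ij by (metis Suc_less_SucD not0_implies_Suc)
    then show ?thesis
      unfolding sum.lessThan_Suc_shift using dec unfolding fm_eigendecomp_iff by (simp add: fm_extend_def)
  qed
qed

theorem fm_hermitian_eigendecomp:
  "fm_hermitian n A \<Longrightarrow> \<exists>U lam. fm_eigendecomp n A U lam"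
proof (induction n arbitrary: A)
  case 0
  then show ?case
    unfolding fm_eigendecomp_def fm_unitary_def fm_eq_def by simp
next
  case (Suc n)
  obtain u e where u: "(\<Sum>i<Suc n. (cmod (u i))\<^sup>2) = 1"
    and eig: "\<forall>i<Suc n. (\<Sum>j<Suc n. A i j * u j) = e * u i"
    using unit_eigenvector_exists[of "Suc n" A] by auto
  obtain Q c where Q: "fm_unitary (Suc n) Q" and col: "\<forall>i<Suc n. Q i 0 = c * u i"
    using unitary_with_first_column[OF _ u] by auto
  define A' where "A' = fm_mult (Suc n) (fm_adj Q) (fm_mult (Suc n) A Q)"
  note deflate = fm_hermitian_deflate[OF Suc.prems Q col eig, folded A'_def, simplified]
  have "fm_hermitian n (\<lambda>i j. A' (Suc i) (Suc j))"
    using deflate(1) unfolding fm_hermitian_def fm_eq_def fm_adj_def by simp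
  then obtain U' lam' where "fm_eigendecomp n (\<lambda>i j. A' (Suc i) (Suc j)) U' lam'"
    using Suc.IH by blast
  then obtain Ub lam where "fm_eigendecomp (Suc n) A' Ub lam"
    using fm_eigendecomp_extend deflate(2,3) by blast
  then have "fm_eigendecomp (Suc n) A (fm_mult (Suc n) Q Ub) lam"
    using Q fm_unitary_conj_cancel[OF Q, of A] unfolding A'_def
    by (rule fm_eigendecomp_conj)
  then show ?case
    by blast
qed

lemma fm_unitary_norm_rows:
  assumes "fm_unitary n U" "x < n"
  shows "(\<Sum>k<n. (cmod (U x k))\<^sup>2) = 1"
proof -
  have "(\<Sum>k<n. complex_of_real ((cmod (U x k))\<^sup>2)) = 1"
    unfolding complex_norm_square using fm_unitary_rows[OF assms(1,2,2)] by (simp add: fm_one_def)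
  then show ?thesis
    by (metis of_real_eq_1_iff of_real_sum)
qed

lemma fm_unitary_norm_cols:
  assumes "fm_unitary n U" "k < n"
  shows "(\<Sum>x<n. (cmod (U x k))\<^sup>2) = 1"
proof -
  have "(\<Sum>x<n. complex_of_real ((cmod (U x k))\<^sup>2)) = 1"
    unfolding complex_norm_square using fm_unitary_cols[OF assms(1,2,2)] by (simp add: fm_one_def mult.commute)
  then show ?thesis
    by (metis of_real_eq_1_iff of_real_sum)
qed

lemma fm_eigendecomp_diag:
  "fm_eigendecomp n M Z r \<Longrightarrow> x < n \<Longrightarrow> M x x = complex_of_real (\<Sum>k<n. (cmod (Z x k))\<^sup>2 * r k)"
  unfolding fm_eigendecomp_iff by (simp add: complex_norm_square mult_ac del: of_real_power)

lemma fm_eigendecomp_gram_nonneg: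
  fixes A :: "'h \<Rightarrow> nat \<Rightarrow> complex"
  assumes dec: "fm_eigendecomp n M Z r" and K: "finite K"
    and gram: "\<forall>x<n. \<forall>y<n. M x y = (\<Sum>h\<in>K. A h x * cnj (A h y))" and k: "k < n"
  shows "r k \<ge> 0"
proof -
  have Z: "fm_unitary n Z"
    using dec unfolding fm_eigendecomp_def by simp
  have "(\<Sum>x<n. \<Sum>y<n. cnj (Z x k) * M x y * Z y k)
      = (\<Sum>x<n. \<Sum>y<n. \<Sum>l<n. complex_of_real (r l) * (cnj (Z x k) * Z x l) * (cnj (Z y l) * Z y k))"
    using dec unfolding fm_eigendecomp_iff
    by (intro sum.cong refl) (simp add: sum_distrib_left sum_distrib_right mult_ac)
  also have "\<dots> = (\<Sum>l<n. complex_of_real (r l) * fm_one k l * fm_one l k)"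
    unfolding sum_sum_sum_factor using fm_unitary_cols[OF Z] k by simp
  also have "\<dots> = (\<Sum>l<n. if l = k then complex_of_real (r k) else 0)"
    by (intro sum.cong refl) (auto simp: fm_one_def)
  finally have "complex_of_real (r k) = (\<Sum>x<n. \<Sum>y<n. cnj (Z x k) * M x y * Z y k)"
    using k by simp
  also have "\<dots> = (\<Sum>h\<in>K. \<Sum>x<n. \<Sum>y<n. (cnj (Z x k) * A h x) * cnj (cnj (Z y k) * A h y))"
    using gram by (simp add: sum_distrib_left sum_distrib_right sum.swap[of _ K] mult_ac)
  also have "\<dots> = complex_of_real (\<Sum>h\<in>K. (cmod (\<Sum>x<n. cnj (Z x k) * A h x))\<^sup>2)"
    unfolding of_real_sum complex_norm_square by (simp add: sum_product)
  finally have "r k = (\<Sum>h\<in>K. (cmod (\<Sum>x<n. cnj (Z x k) * A h x))\<^sup>2)"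
    unfolding of_real_eq_iff .
  then show ?thesis
    by (simp add: sum_nonneg)
qed

lemma fm_eigendecomp_cong:
  "fm_eq n A B \<Longrightarrow> fm_eigendecomp n A U lam \<Longrightarrow> fm_eigendecomp n B U lam"
  unfolding fm_eigendecomp_def fm_eq_def by simp

section \<open>Von Neumann entropy of an eigendecomposition\<close>

definition mat_of_fm :: "nat \<Rightarrow> fmat \<Rightarrow> complex mat" where
  "mat_of_fm n X = mat n n (\<lambda>(i, j). X i j)"

lemma mat_of_fm_carrier [simp]: "mat_of_fm n X \<in> carrier_mat n n"
  unfolding mat_of_fm_def by simp

lemma mat_of_fm_mult: "mat_of_fm n X * mat_of_fm n Y = mat_of_fm n (fm_mult n X Y)"
  unfolding mat_of_fm_def fm_mult_def
  by (rule eq_matI) (auto simp: scalar_prod_def lessThan_atLeast0 intro!: sum.cong)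

lemma mat_of_fm_cong: "fm_eq n X Y \<Longrightarrow> mat_of_fm n X = mat_of_fm n Y"
  unfolding mat_of_fm_def fm_eq_def by (rule eq_matI) auto

lemma mat_of_fm_one: "mat_of_fm n fm_one = 1\<^sub>m n"
  unfolding mat_of_fm_def fm_one_def by (rule eq_matI) auto

lemma char_poly_eigendecomp:
  assumes "fm_eigendecomp n A U lam"
  shows "char_poly (mat_of_fm n A) = (\<Prod>a\<leftarrow>map (\<lambda>i. complex_of_real (lam i)) [0..<n]. [:- a, 1:])"
proof -
  have U: "fm_unitary n U" and A: "fm_eq n A (fm_mult n (fm_mult n U (fm_diag lam)) (fm_adj U))"
    using assms unfolding fm_eigendecomp_def by auto
  have "similar_mat (mat_of_fm n A) (mat_of_fm n (fm_diag lam))"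
  proof (rule similar_matI)
    show "mat_of_fm n U * mat_of_fm n (fm_adj U) = 1\<^sub>m n"
      "mat_of_fm n (fm_adj U) * mat_of_fm n U = 1\<^sub>m n"
      using U unfolding fm_unitary_def mat_of_fm_mult mat_of_fm_one[symmetric]
      by (auto intro: mat_of_fm_cong)
    show "mat_of_fm n A = mat_of_fm n U * mat_of_fm n (fm_diag lam) * mat_of_fm n (fm_adj U)"
      using A unfolding mat_of_fm_mult by (rule mat_of_fm_cong)
  qed auto
  moreover have "upper_triangular (mat_of_fm n (fm_diag lam))"
    unfolding upper_triangular_def mat_of_fm_def fm_diag_def by simp
  moreover have "diag_mat (mat_of_fm n (fm_diag lam)) = map (\<lambda>i. complex_of_real (lam i)) [0..<n]"
    unfolding diag_mat_def mat_of_fm_def fm_diag_def by simp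
  ultimately show ?thesis
    using char_poly_similar char_poly_upper_triangular mat_of_fm_carrier by metis
qed

lemma order_prod_linear_factors:
  "order e (\<Prod>a\<leftarrow>map f xs. [:- a, 1:]) = length (filter (\<lambda>x. f x = e) xs)"
proof (induction xs)
  case Nil
  then show ?case
    by (simp add: order_0I)
next
  case (Cons x xs)
  have "(\<Prod>a\<leftarrow>map f xs. [:- a, 1:]) \<noteq> 0"
    by (auto simp: prod_list_zero_iff)
  then have "[:- f x, 1:] * (\<Prod>a\<leftarrow>map f xs. [:- a, 1:]) \<noteq> 0"
    by (simp only: mult_eq_0_iff) auto
  then have "order e ([:- f x, 1:] * (\<Prod>a\<leftarrow>map f xs. [:- a, 1:]))
      = order e [:- f x, 1:] + order e (\<Prod>a\<leftarrow>map f xs. [:- a, 1:])"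
    by (rule order_mult)
  then show ?case
    using Cons by (auto simp: order_linear')
qed

lemma vn_entropy_linear_char_poly:
  assumes M: "M \<in> carrier_mat n n"
    and cp: "char_poly M = (\<Prod>a\<leftarrow>map (\<lambda>i. complex_of_real (lam i)) [0..<n]. [:- a, 1:])"
  shows "vn_entropy M = - (\<Sum>k<n. xlogx (lam k))"
proof -
  let ?l = "\<lambda>i. complex_of_real (lam i)"
  have ord: "order e (char_poly M) = card {i\<in>{..<n}. ?l i = e}" for e
    unfolding cp order_prod_linear_factors
    by (subst distinct_length_filter) (auto intro!: arg_cong[where f = card])
  have "spectrum M = {e. poly (char_poly M) e = 0}"
    by (rule spectrum_root_char_poly[OF M])
  also have "\<dots> = {e. order e (char_poly M) \<noteq> 0}"
    unfolding cp by (auto simp: order_root prod_list_zero_iff)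
  also have "\<dots> = ?l ` {..<n}"
    unfolding ord by (auto simp: card_gt_0_iff)
  finally have spec: "spectrum M = ?l ` {..<n}" .
  have "(\<Sum>k<n. xlogx (lam k)) = (\<Sum>e\<in>?l ` {..<n}. \<Sum>k\<in>{i\<in>{..<n}. ?l i = e}. xlogx (lam k))"
    by (rule sum.image_gen) simp
  also have "\<dots> = (\<Sum>e\<in>?l ` {..<n}. real (card {i\<in>{..<n}. ?l i = e}) * xlogx (Re e))"
    by (intro sum.cong refl) auto
  finally show ?thesis
    unfolding vn_entropy_def spec ord by simp
qed

lemma vn_entropy_eigendecomp:
  assumes M: "M \<in> carrier_mat n n" and dec: "fm_eigendecomp n (\<lambda>i j. M $$ (i, j)) U lam"
  shows "vn_entropy M = - (\<Sum>k<n. xlogx (lam k))"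
proof -
  have "M = mat_of_fm n (\<lambda>i j. M $$ (i, j))"
    using M unfolding mat_of_fm_def by (auto intro!: eq_matI)
  then show ?thesis
    using vn_entropy_linear_char_poly[OF M] char_poly_eigendecomp[OF dec] by metis
qed

section \<open>Classical entropy inequalities\<close>

lemma xlogx_nonpos: "0 \<le> x \<Longrightarrow> x \<le> 1 \<Longrightarrow> xlogx x \<le> 0"
  unfolding xlogx_def by (auto simp: mult_nonneg_nonpos)

lemma xlogx_eq_mult_log: "xlogx x = x * (if x > 0 then log 2 x else 0)" if "x \<ge> 0"
  using that unfolding xlogx_def by auto

lemma neg_xlogx_ge_self: "0 \<le> x \<Longrightarrow> x \<le> 1/2 \<Longrightarrow> - xlogx x \<ge> x"
proof (cases "x = 0")
  case False
  assume x: "0 \<le> x" "x \<le> 1/2"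
  then have "log 2 x \<le> log 2 (1/2)"
    using False by simp
  also have "log 2 (1/2) = -1"
    by (simp add: log_divide)
  finally have "x * log 2 x \<le> x * (-1)"
    using x by (intro mult_left_mono) auto
  then show ?thesis
    unfolding xlogx_def using False by simp
qed (simp add: xlogx_def)

lemma binary_entropy_ge_twice_small:
  assumes e: "0 < e" "e \<le> 1/5"
  shows "- xlogx (1 - e) - xlogx e \<ge> 2 * e"
proof -
  have "log 2 e \<le> log 2 (1/4)"
    using e by simp
  also have "log 2 (1/4) = -2"
    by (simp add: log_divide) (metis log2_of_power_eq mult_2 numeral_Bit0 of_nat_numeral power2_eq_square)
  finally have "e * log 2 e \<le> e * (-2)"
    using e by (intro mult_left_mono) auto
  then have "- xlogx e \<ge> 2 * e"
    unfolding xlogx_def using e by auto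
  moreover have "xlogx (1 - e) \<le> 0"
    using e by (intro xlogx_nonpos) auto
  ultimately show ?thesis
    by simp
qed

lemma binary_entropy_ge_twice_mid:
  assumes e: "1/5 \<le> e" "e \<le> 1/2"
  shows "- xlogx (1 - e) - xlogx e \<ge> 2 * e"
proof -
  define f where "f x = - (1 - x) * ln (1 - x) - x * ln x - 2 * ln 2 * x" for x :: real
  have deriv: "(f has_real_derivative (ln (1 - x) - ln x - 2 * ln 2)) (at x)" if "0 < x" "x < 1" for x
  proof -
    have "(f has_real_derivative (- (-1) * ln (1 - x) - (1 - x) * ((-1) / (1 - x))
        - (1 * ln x + x * (1 / x)) - 2 * ln 2 * 1)) (at x)"
      unfolding f_def using that by (auto intro!: derivative_eq_intros simp: divide_eq_eq)
    moreover have "- (-1) * ln (1 - x) - (1 - x) * ((-1) / (1 - x)) - (1 * ln x + x * (1 / x))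
        - 2 * ln 2 * 1 = ln (1 - x) - ln x - 2 * ln 2"
      using that by (simp add: field_simps)
    ultimately show ?thesis
      by simp
  qed
  have "f (1/2) \<le> f e"
  proof (rule DERIV_nonpos_imp_nonincreasing[of e "1/2" f])
    fix x assume x: "e \<le> x" "x \<le> 1/2"
    then have x0: "0 < x" "x < 1"
      using e by auto
    have "ln (1 - x) - ln x = ln ((1 - x) / x)"
      using x0 by (simp add: ln_div)
    also have "\<dots> \<le> ln 4"
      using x e x0 by (simp add: divide_le_eq)
    also have "ln (4::real) = 2 * ln 2"
      by (metis ln_realpow mult_2 numeral_Bit0 of_nat_numeral power2_eq_square zero_less_numeral)
    finally show "\<exists>y. (f has_real_derivative y) (at x) \<and> y \<le> 0"
      using deriv[OF x0] by auto
  qed (use e in simp)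
  moreover have "f (1/2) = 0"
    unfolding f_def by (simp add: ln_div)
  moreover have "- xlogx (1 - e) - xlogx e - 2 * e = f e / ln 2"
    unfolding f_def xlogx_def log_def using e by (simp add: field_simps)
  ultimately show ?thesis
    by (smt (verit) divide_nonneg_pos ln_gt_zero_iff)
qed

text \<open>The binary entropy is concave with value 1 at 1/2, hence lies above the chord 2e.\<close>

lemma binary_entropy_ge_twice:
  "0 \<le> e \<Longrightarrow> e \<le> 1/2 \<Longrightarrow> - xlogx (1 - e) - xlogx e \<ge> 2 * e"
  using binary_entropy_ge_twice_small[of e] binary_entropy_ge_twice_mid[of e]
  by (cases "e = 0") (simp add: xlogx_def, linarith)

lemma entropy_nonneg:
  "(\<And>b. b \<in> B \<Longrightarrow> 0 \<le> q b \<and> q b \<le> 1) \<Longrightarrow> 0 \<le> - (\<Sum>b\<in>B. xlogx (q b))"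
  using sum_nonpos[of B "\<lambda>b. xlogx (q b)"] xlogx_nonpos by (simp add: sum_nonpos)

lemma entropy_ge_binary_entropy:
  fixes q :: "nat \<Rightarrow> real"
  assumes nn: "\<forall>b<m. q b \<ge> 0" and total: "(\<Sum>b<m. q b) = 1" and j: "j < m"
  shows "- (\<Sum>b<m. xlogx (q b)) \<ge> - xlogx (q j) - xlogx (1 - q j)"
proof -
  define e where "e = 1 - q j"
  have rest: "(\<Sum>b\<in>{..<m} - {j}. q b) = e"
    using total j unfolding e_def by (simp add: sum_diff1)
  have "- xlogx (q b) \<ge> - q b * log 2 e" if b: "b \<in> {..<m} - {j}" for b
  proof (cases "q b = 0")
    case False
    then have qb: "q b > 0"
      using nn b by (simp add: order_less_le)
    have "q b \<le> e"
      using b nn member_le_sum[of b "{..<m} - {j}" q] rest by simp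
    then have "q b * log 2 (q b) \<le> q b * log 2 e"
      using qb by (intro mult_left_mono) auto
    then show ?thesis
      unfolding xlogx_def using False by simp
  qed (simp add: xlogx_def)
  then have "(\<Sum>b\<in>{..<m} - {j}. - q b * log 2 e) \<le> (\<Sum>b\<in>{..<m} - {j}. - xlogx (q b))"
    by (rule sum_mono)
  moreover have "(\<Sum>b\<in>{..<m} - {j}. - q b * log 2 e) = - xlogx e"
  proof (cases "e = 0")
    case True
    then have "\<forall>b\<in>{..<m} - {j}. q b = 0"
      using rest nn sum_nonneg_eq_0_iff[of "{..<m} - {j}" q] by auto
    then show ?thesis
      using True by (simp add: xlogx_def)
  qed (use rest in \<open>simp add: xlogx_def sum_distrib_right[symmetric] sum_negf\<close>)
  moreover have "- (\<Sum>b<m. xlogx (q b)) = - xlogx (q j) + (\<Sum>b\<in>{..<m} - {j}. - xlogx (q b))"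
    using j by (simp add: sum.remove sum_negf)
  ultimately show ?thesis
    unfolding e_def by simp
qed

text \<open>Either no weight exceeds 1/2 and the entropy is at least 1, or the largest weight
  1 - e dominates and the entropy is at least the binary entropy of e.\<close>

lemma entropy_ge_min_one_twice_defect:
  fixes q :: "nat \<Rightarrow> real"
  assumes nn: "\<forall>b<m. q b \<ge> 0" and total: "(\<Sum>b<m. q b) = 1" and j: "j < m"
    and jmax: "\<forall>b<m. q b \<le> q j"
  shows "- (\<Sum>b<m. xlogx (q b)) \<ge> min 1 (2 * (1 - q j))"
proof (cases "q j \<le> 1/2")
  case True
  have "(\<Sum>b<m. q b) \<le> (\<Sum>b<m. - xlogx (q b))"
    using nn jmax True by (intro sum_mono neg_xlogx_ge_self) (auto intro: order.trans)
  then show ?thesis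
    using total by (simp add: sum_negf)
next
  case False
  moreover have "q j \<le> 1"
    using total nn j member_le_sum[of j "{..<m}" q] by simp
  ultimately have "- xlogx (q j) - xlogx (1 - q j) \<ge> 2 * (1 - q j)"
    using binary_entropy_ge_twice[of "1 - q j"] by simp
  then show ?thesis
    using entropy_ge_binary_entropy[OF nn total j] by simp
qed

lemma gibbs_term_eq_ln:
  "r > 0 \<Longrightarrow> s > 0 \<Longrightarrow> xlogx r - r * log 2 s - (r - s) / ln 2 = (s - r - r * ln (s / r)) / ln 2"
  unfolding xlogx_def log_def by (simp add: ln_div field_simps)

lemma gibbs_term_ge:
  assumes r: "r \<ge> 0" and s: "s > 0"
  shows "xlogx r - r * log 2 s \<ge> (r - s) / ln 2"
proof (cases "r = 0")
  case False
  then have rp: "r > 0"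
    using r by simp
  have "r * ln (s / r) \<le> r * (s / r - 1)"
    using rp s by (intro mult_left_mono ln_le_minus_one) auto
  also have "\<dots> = s - r"
    using rp by (simp add: field_simps)
  finally show ?thesis
    using gibbs_term_eq_ln[OF rp s] by (smt (verit) divide_nonneg_pos ln_gt_zero_iff)
qed (use s in \<open>simp add: xlogx_def\<close>)

lemma gibbs_term_eq_imp_eq:
  assumes r: "r \<ge> 0" and s: "s > 0" and eq: "xlogx r - r * log 2 s = (r - s) / ln 2"
  shows "r = s"
proof (cases "r = 0")
  case False
  then have rp: "r > 0"
    using r by simp
  then have "ln (s / r) = s / r - 1"
    using gibbs_term_eq_ln[OF rp s] eq by (simp add: field_simps)
  then have "s / r = 1"
    using rp s by (intro ln_eq_minus_one) auto
  then show ?thesis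
    using rp by simp
qed (use eq s in \<open>simp add: xlogx_def\<close>)

lemma doubly_stochastic_gibbs_sum:
  fixes T :: "nat \<Rightarrow> nat \<Rightarrow> real" and r s D L :: "nat \<Rightarrow> real"
  assumes Tx: "\<forall>x<n. (\<Sum>k<n. T k x) = 1" and Tk: "\<forall>k<n. (\<Sum>x<n. T k x) = 1"
    and D: "\<forall>x<n. D x = (\<Sum>k<n. T k x * r k)"
  shows "(\<Sum>k<n. \<Sum>x<n. T k x * (xlogx (r k) - r k * L x - (r k - s x) / ln 2))
    = (\<Sum>k<n. xlogx (r k)) - (\<Sum>x<n. D x * L x) - ((\<Sum>x<n. D x) - (\<Sum>x<n. s x)) / ln 2"
proof -
  have swap: "(\<Sum>k<n. \<Sum>x<n. T k x * h k x) = (\<Sum>x<n. \<Sum>k<n. T k x * h k x)" for h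
    by (rule sum.swap)
  have rows: "(\<Sum>k<n. \<Sum>x<n. T k x * g k) = (\<Sum>k<n. g k)" for g
    using Tk by (simp add: sum_distrib_right[symmetric])
  have cols: "(\<Sum>k<n. \<Sum>x<n. T k x * h x) = (\<Sum>x<n. h x)" for h
    unfolding swap using Tx by (simp add: sum_distrib_right[symmetric])
  have DL: "(\<Sum>k<n. \<Sum>x<n. T k x * (r k * L x)) = (\<Sum>x<n. D x * L x)"
    unfolding swap using D by (simp add: sum_distrib_left sum_distrib_right mult_ac)
  have Dr: "(\<Sum>k<n. \<Sum>x<n. T k x * r k) = (\<Sum>x<n. D x)"
    unfolding swap using D by (simp add: mult_ac)
  have "(\<Sum>k<n. \<Sum>x<n. T k x * (xlogx (r k) - r k * L x - (r k - s x) / ln 2))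
      = (\<Sum>k<n. \<Sum>x<n. T k x * xlogx (r k)) - (\<Sum>k<n. \<Sum>x<n. T k x * (r k * L x))
        - ((\<Sum>k<n. \<Sum>x<n. T k x * r k) - (\<Sum>k<n. \<Sum>x<n. T k x * s x)) / ln 2"
    by (simp add: right_diff_distrib sum_subtractf diff_divide_distrib flip: sum_divide_distrib)
  then show ?thesis
    unfolding DL Dr rows cols .
qed

lemma doubly_stochastic_cross_entropy_eq:
  fixes T :: "nat \<Rightarrow> nat \<Rightarrow> real" and r s D :: "nat \<Rightarrow> real"
  defines "L x \<equiv> if s x > 0 then log 2 (s x) else 0"
  assumes Tnn: "\<forall>k<n. \<forall>x<n. T k x \<ge> 0"
    and Tx: "\<forall>x<n. (\<Sum>k<n. T k x) = 1" and Tk: "\<forall>k<n. (\<Sum>x<n. T k x) = 1"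
    and D: "\<forall>x<n. D x = (\<Sum>k<n. T k x * r k)" and rnn: "\<forall>k<n. r k \<ge> 0"
    and snn: "\<forall>x<n. s x \<ge> 0" and supp: "\<forall>x<n. s x = 0 \<longrightarrow> D x = 0"
    and total: "(\<Sum>x<n. D x) = (\<Sum>x<n. s x)"
    and eq: "(\<Sum>k<n. xlogx (r k)) = (\<Sum>x<n. D x * L x)"
  shows "\<forall>x<n. D x = s x"
proof -
  define f where "f k x = T k x * (xlogx (r k) - r k * L x - (r k - s x) / ln 2)" for k x
  have fnn: "f k x \<ge> 0" if kx: "k < n" "x < n" for k x
  proof (cases "s x > 0")
    case True
    then show ?thesis
      using gibbs_term_ge[of "r k" "s x"] rnn Tnn kx unfolding f_def L_def by simp
  next
    case False
    then have "s x = 0" "D x = 0"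
      using snn supp kx by force+
    then have "T k x * r k = 0"
      using D Tnn rnn kx sum_nonneg_eq_0_iff[of "{..<n}" "\<lambda>k. T k x * r k"] by simp
    then show ?thesis
      unfolding f_def L_def using \<open>s x = 0\<close> by (auto simp: xlogx_def)
  qed
  have "(\<Sum>k<n. \<Sum>x<n. f k x) = 0"
    unfolding f_def doubly_stochastic_gibbs_sum[OF Tx Tk D] total eq by simp
  then have "\<forall>k\<in>{..<n}. (\<Sum>x<n. f k x) = 0"
    using fnn by (subst (asm) sum_nonneg_eq_0_iff) (auto intro!: sum_nonneg)
  then have f0: "f k x = 0" if k: "k < n" and x: "x < n" for k x
    using sum_nonneg_eq_0_iff[of "{..<n}" "f k"] fnn[OF k] k x by auto
  show ?thesis
  proof (intro allI impI)
    fix x assume x: "x < n"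
    show "D x = s x"
    proof (cases "s x > 0")
      case True
      have Trs: "T k x * r k = T k x * s x" if k: "k < n" for k
        using f0[OF k x] gibbs_term_eq_imp_eq[of "r k" "s x"] rnn k True
        unfolding f_def L_def by auto
      have "D x = (\<Sum>k<n. T k x * s x)"
        unfolding D[rule_format, OF x] by (rule sum.cong) (simp_all add: Trs)
      then show ?thesis
        using Tx x by (simp add: sum_distrib_right[symmetric])
    qed (use snn supp x in force)
  qed
qed

lemma grid_marginals_nonneg:
  fixes D p q :: "nat \<Rightarrow> real"
  assumes Dnn: "\<forall>x<m * n. D x \<ge> 0"
    and p: "\<forall>a<m. p a = (\<Sum>b<n. D (a + m * b))" and q: "\<forall>b<n. q b = (\<Sum>a<m. D (a + m * b))"
  shows "a < m \<Longrightarrow> p a \<ge> 0" and "b < n \<Longrightarrow> q b \<ge> 0"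
  using p q Dnn add_mult_less_mult by (auto intro!: sum_nonneg)

lemma grid_zero_of_marginal_zero:
  fixes D p q :: "nat \<Rightarrow> real"
  assumes Dnn: "\<forall>x<m * n. D x \<ge> 0"
    and p: "\<forall>a<m. p a = (\<Sum>b<n. D (a + m * b))" and q: "\<forall>b<n. q b = (\<Sum>a<m. D (a + m * b))"
    and ab: "a < m" "b < n" and zero: "p a * q b = 0"
  shows "D (a + m * b) = 0"
proof -
  have "D (a + m * b') \<ge> 0" "D (a' + m * b) \<ge> 0" if "a' < m" "b' < n" for a' b'
    using Dnn add_mult_less_mult ab that by auto
  then have "D (a + m * b) \<le> p a" "D (a + m * b) \<le> q b"
    using p q ab member_le_sum[of b "{..<n}" "\<lambda>b. D (a + m * b)"]
      member_le_sum[of a "{..<m}" "\<lambda>a. D (a + m * b)"] by auto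
  then show ?thesis
    using zero Dnn add_mult_less_mult[OF ab] by (auto simp: order.antisym)
qed

lemma cross_entropy_product_marginals:
  fixes D p q :: "nat \<Rightarrow> real" and m n :: nat
  defines "s x \<equiv> p (x mod m) * q (x div m)"
  assumes Dnn: "\<forall>x<m * n. D x \<ge> 0"
    and p: "\<forall>a<m. p a = (\<Sum>b<n. D (a + m * b))" and q: "\<forall>b<n. q b = (\<Sum>a<m. D (a + m * b))"
  shows "(\<Sum>x<m * n. D x * (if s x > 0 then log 2 (s x) else 0))
          = (\<Sum>a<m. xlogx (p a)) + (\<Sum>b<n. xlogx (q b))"
proof -
  note nn = grid_marginals_nonneg[OF Dnn p q]
  define lg where "lg y = (if y > 0 then log 2 y else 0)" for y :: real
  have split: "D (a + m * b) * lg (s (a + m * b)) = D (a + m * b) * lg (p a) + D (a + m * b) * lg (q b)"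
    if ab: "a < m" "b < n" for a b
  proof (cases "p a > 0 \<and> q b > 0")
    case True
    then show ?thesis
      using ab unfolding s_def lg_def by (simp add: log_mult distrib_left)
  next
    case False
    then have "p a * q b = 0"
      using nn(1)[OF ab(1)] nn(2)[OF ab(2)] by (auto simp: not_less)
    then show ?thesis
      using grid_zero_of_marginal_zero[OF Dnn p q ab] by simp
  qed
  have "(\<Sum>x<m * n. D x * lg (s x)) = (\<Sum>a<m. \<Sum>b<n. D (a + m * b) * lg (p a) + D (a + m * b) * lg (q b))"
    unfolding sum_lessThan_mult_split by (intro sum.cong refl) (simp add: split)
  also have "\<dots> = (\<Sum>a<m. p a * lg (p a)) + (\<Sum>b<n. q b * lg (q b))"
  proof -
    have "(\<Sum>a<m. \<Sum>b<n. D (a + m * b) * lg (p a)) = (\<Sum>a<m. p a * lg (p a))"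
      using p by (simp add: sum_distrib_right[symmetric])
    moreover have "(\<Sum>a<m. \<Sum>b<n. D (a + m * b) * lg (q b)) = (\<Sum>b<n. q b * lg (q b))"
      by (subst sum.swap) (use q in \<open>simp add: sum_distrib_right[symmetric]\<close>)
    ultimately show ?thesis
      by (simp add: sum.distrib)
  qed
  also have "\<dots> = (\<Sum>a<m. xlogx (p a)) + (\<Sum>b<n. xlogx (q b))"
    using nn by (simp add: xlogx_eq_mult_log lg_def)
  finally show ?thesis
    unfolding lg_def .
qed

lemma doubly_stochastic_entropy_additive_imp_product:
  fixes T :: "nat \<Rightarrow> nat \<Rightarrow> real" and r D p q :: "nat \<Rightarrow> real" and m n :: nat
  assumes Tnn: "\<forall>k<m * n. \<forall>x<m * n. T k x \<ge> 0"
    and Tx: "\<forall>x<m * n. (\<Sum>k<m * n. T k x) = 1" and Tk: "\<forall>k<m * n. (\<Sum>x<m * n. T k x) = 1"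
    and D: "\<forall>x<m * n. D x = (\<Sum>k<m * n. T k x * r k)" and rnn: "\<forall>k<m * n. r k \<ge> 0"
    and p: "\<forall>a<m. p a = (\<Sum>b<n. D (a + m * b))" and q: "\<forall>b<n. q b = (\<Sum>a<m. D (a + m * b))"
    and total: "(\<Sum>a<m. p a) = 1"
    and additive: "(\<Sum>k<m * n. xlogx (r k)) = (\<Sum>a<m. xlogx (p a)) + (\<Sum>b<n. xlogx (q b))"
  shows "\<forall>a<m. \<forall>b<n. D (a + m * b) = p a * q b"
proof -
  define s where "s x = p (x mod m) * q (x div m)" for x
  have Dnn: "\<forall>x<m * n. D x \<ge> 0"
    using D Tnn rnn by (auto intro!: sum_nonneg)
  have sum_D: "(\<Sum>x<m * n. D x) = 1"
    unfolding sum_lessThan_mult_split using p total by simp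
  have "(\<Sum>b<n. q b) = (\<Sum>a<m. p a)"
    using p q by (simp add: sum.swap[of _ "{..<n}"])
  then have "(\<Sum>x<m * n. s x) = 1"
    unfolding s_def sum_lessThan_mult_split using total by (simp add: sum_product[symmetric])
  moreover have "s x \<ge> 0" "s x = 0 \<longrightarrow> D x = 0" if "x < m * n" for x
    using mod_div_less_of_less_mult[OF that] grid_marginals_nonneg[OF Dnn p q]
      grid_zero_of_marginal_zero[OF Dnn p q, of "x mod m" "x div m"] unfolding s_def by auto
  ultimately have "\<forall>x<m * n. D x = s x"
    using doubly_stochastic_cross_entropy_eq[OF Tnn Tx Tk D rnn, of s]
      cross_entropy_product_marginals[OF Dnn p q, folded s_def] additive sum_D by simp
  then show ?thesis
    using add_mult_less_mult unfolding s_def by simp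
qed

lemma exists_maximizer:
  fixes q :: "nat \<Rightarrow> 'a::linorder"
  assumes "0 < m"
  shows "\<exists>j<m. \<forall>b<m. q b \<le> q j"
proof -
  have "Max (q ` {..<m}) \<in> q ` {..<m}"
    using assms by (intro Max_in) auto
  then obtain j where "j < m" "q j = Max (q ` {..<m})"
    by auto
  then show ?thesis
    by (auto intro!: Max_ge)
qed

lemma two_positive_of_entropy_nonzero:
  fixes q :: "nat \<Rightarrow> real"
  assumes nn: "\<forall>a<m. q a \<ge> 0" and total: "(\<Sum>a<m. q a) = 1" and H: "(\<Sum>a<m. xlogx (q a)) \<noteq> 0"
  obtains a1 a2 where "a1 < m" "a2 < m" "a1 \<noteq> a2" "q a1 > 0" "q a2 > 0"
proof -
  obtain a1 where a1: "a1 < m" "q a1 > 0"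
    using total nn by (metis (no_types, lifting) lessThan_iff order_less_le sum.neutral zero_neq_one)
  show thesis
  proof (cases "\<exists>a2<m. a2 \<noteq> a1 \<and> q a2 > 0")
    case True
    then show ?thesis
      using that a1 by blast
  next
    case False
    have "q a = 0" if "a < m" "a \<noteq> a1" for a
      using False nn that by (metis order_less_le)
    then have rest: "\<forall>a\<in>{..<m} - {a1}. q a = 0"
      by blast
    then have "q a1 = 1"
      using total a1 by (simp add: sum.remove[of "{..<m}" a1])
    moreover have "(\<Sum>a<m. xlogx (q a)) = xlogx (q a1)"
      using rest a1 by (simp add: sum.remove[of "{..<m}" a1] xlogx_def)
    ultimately show ?thesis
      using H by (simp add: xlogx_def)
  qed
qed

lemma sum_ge_one_of_min_bounds:
  fixes h e :: "'a \<Rightarrow> real"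
  assumes I: "finite I" and h: "\<forall>i\<in>I. 0 \<le> h i \<and> min 1 (2 * e i) \<le> h i" and e: "(\<Sum>i\<in>I. e i) \<ge> 1/2"
  shows "(\<Sum>i\<in>I. h i) \<ge> 1"
proof (cases "\<exists>i\<in>I. h i \<ge> 1")
  case True
  then obtain i where "i \<in> I" "h i \<ge> 1"
    by blast
  then show ?thesis
    using I h member_le_sum[of i I h] by auto
next
  case False
  then have "(\<Sum>i\<in>I. 2 * e i) \<le> (\<Sum>i\<in>I. h i)"
    using h by (intro sum_mono) (auto simp: min_def split: if_splits)
  then show ?thesis
    using e by (simp add: sum_distrib_left[symmetric])
qed

lemma sum_le_sum_of_cover:
  fixes w :: "'a \<Rightarrow> real"
  assumes B: "finite B" and I: "finite I" and sub: "\<forall>i\<in>I. A i \<subseteq> B"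
    and cover: "\<forall>x\<in>B. \<exists>i\<in>I. x \<in> A i" and nn: "\<forall>x\<in>B. w x \<ge> 0"
  shows "(\<Sum>x\<in>B. w x) \<le> (\<Sum>i\<in>I. \<Sum>x\<in>A i. w x)"
proof -
  have "(\<Sum>x\<in>B. w x) \<le> (\<Sum>x\<in>B. \<Sum>i\<in>I. if x \<in> A i then w x else 0)"
  proof (rule sum_mono)
    fix x assume x: "x \<in> B"
    then obtain i where i: "i \<in> I" "x \<in> A i"
      using cover by auto
    then have "w x = (if x \<in> A i then w x else 0)"
      by simp
    also have "\<dots> \<le> (\<Sum>i\<in>I. if x \<in> A i then w x else 0)"
      using i I nn x by (intro member_le_sum) auto
    finally show "w x \<le> (\<Sum>i\<in>I. if x \<in> A i then w x else 0)" .
  qed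
  also have "\<dots> = (\<Sum>i\<in>I. \<Sum>x\<in>B. if x \<in> A i then w x else 0)"
    by (rule sum.swap)
  also have "\<dots> = (\<Sum>i\<in>I. \<Sum>x\<in>A i. w x)"
  proof (rule sum.cong[OF refl])
    fix i assume "i \<in> I"
    then have "B \<inter> A i = A i"
      using sub by auto
    then show "(\<Sum>x\<in>B. if x \<in> A i then w x else 0) = (\<Sum>x\<in>A i. w x)"
      using B by (simp add: sum.inter_restrict[symmetric])
  qed
  finally show ?thesis .
qed

text \<open>Bessel's inequality for the orthogonal family phi a, evaluated at the coordinate g0.\<close>

lemma bessel_coordinate:
  fixes phi :: "'b \<Rightarrow> 'a \<Rightarrow> complex" and l :: "'b \<Rightarrow> real"
  assumes K: "finite K" and P: "finite P" and g0: "g0 \<in> K" and lpos: "\<forall>a\<in>P. l a > 0"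
    and gram: "\<forall>a\<in>P. \<forall>b\<in>P. (\<Sum>h\<in>K. phi a h * cnj (phi b h)) = (if a = b then complex_of_real (l a) else 0)"
  shows "(\<Sum>a\<in>P. (cmod (phi a g0))\<^sup>2 / l a) \<le> 1"
proof -
  define c where "c a = cnj (phi a g0) / complex_of_real (l a)" for a
  define w where "w h = (\<Sum>a\<in>P. c a * phi a h)" for h
  define s where "s = (\<Sum>a\<in>P. (cmod (phi a g0))\<^sup>2 / l a)"
  have s_nn: "s \<ge> 0"
    unfolding s_def using lpos by (intro sum_nonneg) auto
  have coeff: "c a * phi a g0 = complex_of_real ((cmod (phi a g0))\<^sup>2 / l a)" for a
    unfolding c_def of_real_divide complex_norm_square by (simp add: mult.commute)
  have "(\<Sum>h\<in>K. w h * cnj (w h)) = (\<Sum>h\<in>K. \<Sum>a\<in>P. \<Sum>b\<in>P. c a * cnj (c b) * (phi a h * cnj (phi b h)))"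
    unfolding w_def by (simp add: sum_product algebra_simps)
  also have "\<dots> = (\<Sum>a\<in>P. \<Sum>b\<in>P. c a * cnj (c b) * (\<Sum>h\<in>K. phi a h * cnj (phi b h)))"
    by (simp add: sum_distrib_left sum.swap[of _ K])
  also have "\<dots> = (\<Sum>a\<in>P. \<Sum>b\<in>P. if a = b then c a * cnj (c a) * complex_of_real (l a) else 0)"
    using gram by (intro sum.cong refl) auto
  also have "\<dots> = (\<Sum>a\<in>P. c a * cnj (c a) * complex_of_real (l a))"
    using P by simp
  also have "\<dots> = complex_of_real s"
    unfolding s_def of_real_sum
  proof (intro sum.cong refl)
    fix a assume "a \<in> P"
    then have "c a * cnj (c a) * complex_of_real (l a) = phi a g0 * cnj (phi a g0) / complex_of_real (l a)"
      unfolding c_def using lpos by (simp add: field_simps power2_eq_square)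
    then show "c a * cnj (c a) * complex_of_real (l a) = complex_of_real ((cmod (phi a g0))\<^sup>2 / l a)"
      unfolding of_real_divide complex_norm_square .
  qed
  finally have ww: "(\<Sum>h\<in>K. (cmod (w h))\<^sup>2) = s"
    unfolding complex_norm_square[symmetric] of_real_sum[symmetric] of_real_eq_iff .
  have "w g0 = complex_of_real s"
    unfolding w_def s_def of_real_sum coeff ..
  then have "s\<^sup>2 \<le> s"
    using ww K g0 member_le_sum[of g0 K "\<lambda>h. (cmod (w h))\<^sup>2"] s_nn by simp
  then have "s \<le> 1"
    using s_nn by (cases "s = 0") (auto simp: power2_eq_square)
  then show ?thesis
    unfolding s_def .
qed

section \<open>Product basis, partial traces and local rotations\<close>

lemma mod_prod_eq_mixed_radix_sum:
  fixes L :: nat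
  shows "(x::nat) mod (\<Prod>u<L. r u) = (\<Sum>t<L. (x div (\<Prod>u<t. r u)) mod r t * (\<Prod>u<t. r u))"
proof (induction L)
  case (Suc L)
  have "x mod (\<Prod>u<Suc L. r u) = x mod ((\<Prod>u<L. r u) * r L)"
    by (simp add: mult.commute)
  also have "\<dots> = (\<Prod>u<L. r u) * (x div (\<Prod>u<L. r u) mod r L) + x mod (\<Prod>u<L. r u)"
    by (rule mod_mult2_eq)
  finally show ?case
    using Suc by (simp add: mult.commute)
qed simp

lemma bij_betw_mixed_radix_digits:
  fixes L :: nat and r :: "nat \<Rightarrow> nat"
  assumes r: "\<forall>t<L. r t > 0"
  shows "bij_betw (\<lambda>x. restrict (\<lambda>t. (x div (\<Prod>u<t. r u)) mod r t) {..<L})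
           {..<(\<Prod>u<L. r u)} (PiE {..<L} (\<lambda>t. {..<r t}))"
    (is "bij_betw ?f ?A ?B")
proof -
  have inj: "inj_on ?f ?A"
  proof (rule inj_onI)
    fix x y assume xy: "x \<in> ?A" "y \<in> ?A" and eq: "?f x = ?f y"
    have "(x div (\<Prod>u<t. r u)) mod r t = (y div (\<Prod>u<t. r u)) mod r t" if "t < L" for t
      using fun_cong[OF eq, of t] that by simp
    then have "x mod (\<Prod>u<L. r u) = y mod (\<Prod>u<L. r u)"
      unfolding mod_prod_eq_mixed_radix_sum by simp
    then show "x = y"
      using xy by simp
  qed
  moreover have "?f ` ?A \<subseteq> ?B"
    by (intro image_subsetI PiE_I) (use r in auto)
  moreover have "card ?B = card ?A"
    by (simp add: card_PiE)
  ultimately have "?f ` ?A = ?B"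
    by (intro card_subset_eq) (auto simp: card_image finite_PiE)
  then show ?thesis
    using inj unfolding bij_betw_def by simp
qed

lemma tdim_sites: "tdim d (sites N) = (\<Prod>k<N. d k)"
  unfolding tdim_def sites_def by simp

lemma ldigit_sites: "k < N \<Longrightarrow> ldigit d (sites N) k n = (n div (\<Prod>u<k. d u)) mod d k"
  unfolding ldigit_def sites_def by simp

locale tensor_sites =
  fixes N :: nat and d :: "nat \<Rightarrow> nat"
  assumes dims_pos: "\<forall>k<N. d k \<ge> 1"
begin

definition configs :: "(nat \<Rightarrow> nat) set" where
  "configs = PiE {..<N} (\<lambda>k. {..<d k})"

definition digits :: "nat \<Rightarrow> nat \<Rightarrow> nat" where
  "digits n = restrict (\<lambda>k. ldigit d (sites N) k n) {..<N}"

definition encode :: "(nat \<Rightarrow> nat) \<Rightarrow> nat" where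
  "encode f = inv_into {..<tdim d (sites N)} digits f"

lemma finite_configs [simp]: "finite configs"
  unfolding configs_def by (simp add: finite_PiE)

lemma bij_betw_digits: "bij_betw digits {..<tdim d (sites N)} configs"
proof -
  have "digits = (\<lambda>x. restrict (\<lambda>t. (x div (\<Prod>u<t. d u)) mod d t) {..<N})"
    unfolding digits_def by (intro ext) (auto simp: ldigit_sites)
  then show ?thesis
    unfolding configs_def tdim_sites using bij_betw_mixed_radix_digits[of N d] dims_pos
    by (simp add: Suc_le_eq)
qed

lemma encode_less: "f \<in> configs \<Longrightarrow> encode f < tdim d (sites N)"
  unfolding encode_def using bij_betw_digits by (metis bij_betw_def inv_into_into lessThan_iff)

lemma digits_encode: "f \<in> configs \<Longrightarrow> digits (encode f) = f"
  unfolding encode_def using bij_betw_digits by (simp add: bij_betw_def f_inv_into_f)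

lemma encode_digits: "n < tdim d (sites N) \<Longrightarrow> encode (digits n) = n"
  unfolding encode_def using bij_betw_digits by (simp add: bij_betw_def inv_into_f_f)

lemma digits_in_configs: "n < tdim d (sites N) \<Longrightarrow> digits n \<in> configs"
  using bij_betw_digits by (auto simp: bij_betw_def)

lemma ldigit_encode: "f \<in> configs \<Longrightarrow> k < N \<Longrightarrow> ldigit d (sites N) k (encode f) = f k"
  using digits_encode[of f] unfolding digits_def by (metis restrict_apply' lessThan_iff)

definition rest_configs :: "nat set \<Rightarrow> (nat \<Rightarrow> nat) set" where
  "rest_configs T = {h \<in> configs. \<forall>k\<in>T. h k = 0}"

definition local_configs :: "nat set \<Rightarrow> (nat \<Rightarrow> nat) set" where
  "local_configs T = PiE T (\<lambda>k. {..<d k})"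

text \<open>Entry (a, b) of the reduced state on the sites T of the pure state with amplitudes W,
  in the product basis labelled by local configurations.\<close>

definition ptrace :: "nat set \<Rightarrow> ((nat \<Rightarrow> nat) \<Rightarrow> complex) \<Rightarrow> (nat \<Rightarrow> nat) \<Rightarrow> (nat \<Rightarrow> nat) \<Rightarrow> complex"
  where "ptrace T W a b = (\<Sum>h\<in>rest_configs T. W (override_on h a T) * cnj (W (override_on h b T)))"

lemma finite_rest_configs [simp]: "finite (rest_configs T)"
  unfolding rest_configs_def by simp

lemma configs_eqI: "f \<in> configs \<Longrightarrow> g \<in> configs \<Longrightarrow> (\<And>k. k < N \<Longrightarrow> f k = g k) \<Longrightarrow> f = g"
  unfolding configs_def by (metis PiE_E lessThan_iff ext)

lemma zero_override_in_rest_configs: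
  "T \<subseteq> {..<N} \<Longrightarrow> f \<in> configs \<Longrightarrow> override_on f (\<lambda>_. 0) T \<in> rest_configs T"
  using dims_pos unfolding rest_configs_def configs_def override_on_def
  by (auto simp: PiE_iff extensional_def Suc_le_eq)

lemma override_on_in_configs:
  "T \<subseteq> {..<N} \<Longrightarrow> h \<in> configs \<Longrightarrow> a \<in> local_configs T \<Longrightarrow> override_on h a T \<in> configs"
  unfolding configs_def local_configs_def override_on_def by (auto simp: PiE_iff extensional_def)

lemma override_on_inj:
  assumes "h \<in> rest_configs T" "h' \<in> rest_configs T" "override_on h a T = override_on h' a T"
  shows "h = h'"
proof
  fix k
  show "h k = h' k"
    using assms fun_cong[OF assms(3), of k] unfolding rest_configs_def override_on_def
    by (cases "k \<in> T") auto
qed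

lemma bij_betw_override_on:
  assumes T: "T \<subseteq> {..<N}"
  shows "bij_betw (\<lambda>(h, a). override_on h a T) (rest_configs T \<times> local_configs T) configs"
proof (rule bij_betw_imageI)
  show "inj_on (\<lambda>(h, a). override_on h a T) (rest_configs T \<times> local_configs T)"
  proof (rule inj_onI, clarify)
    fix h a h' a' assume h: "h \<in> rest_configs T" "h' \<in> rest_configs T"
      and a: "a \<in> local_configs T" "a' \<in> local_configs T"
      and eq: "override_on h a T = override_on h' a' T"
    have "a = a'"
    proof
      fix k
      show "a k = a' k"
      proof (cases "k \<in> T")
        case True
        then show ?thesis
          using fun_cong[OF eq, of k] by (simp add: override_on_def)
      next
        case False
        then show ?thesis
          using a unfolding local_configs_def by (metis PiE_arb)
      qed
    qed
    then show "h = h' \<and> a = a'"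
      using override_on_inj[OF h] eq by simp
  qed
  show "(\<lambda>(h, a). override_on h a T) ` (rest_configs T \<times> local_configs T) = configs"
  proof (intro equalityI subsetI)
    fix f assume f: "f \<in> configs"
    have "restrict f T \<in> local_configs T"
      using f T unfolding configs_def local_configs_def by auto
    then show "f \<in> (\<lambda>(h, a). override_on h a T) ` (rest_configs T \<times> local_configs T)"
      using zero_override_in_rest_configs[OF T f]
      by (intro image_eqI[where x = "(override_on f (\<lambda>_. 0) T, restrict f T)"])
        (auto simp: override_on_def)
  qed (use override_on_in_configs[OF T] rest_configs_def in auto)
qed

lemma sum_configs_split:
  assumes "T \<subseteq> {..<N}"
  shows "(\<Sum>f\<in>configs. X f) = (\<Sum>h\<in>rest_configs T. \<Sum>a\<in>local_configs T. X (override_on h a T))"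
  using sum.reindex_bij_betw[OF bij_betw_override_on[OF assms], of X]
  by (simp add: sum.cartesian_product split_def)

lemma bij_betw_override_on_fixed:
  assumes T: "T \<subseteq> {..<N}" and a: "a \<in> local_configs T"
  shows "bij_betw (\<lambda>h. override_on h a T) (rest_configs T) {f \<in> configs. \<forall>k\<in>T. f k = a k}"
proof (rule bij_betw_imageI)
  show "inj_on (\<lambda>h. override_on h a T) (rest_configs T)"
    using override_on_inj by (auto intro!: inj_onI)
  show "(\<lambda>h. override_on h a T) ` rest_configs T = {f \<in> configs. \<forall>k\<in>T. f k = a k}"
  proof (intro equalityI subsetI)
    fix f assume f: "f \<in> {f \<in> configs. \<forall>k\<in>T. f k = a k}"
    then have "f = override_on (override_on f (\<lambda>_. 0) T) a T"
      by (auto simp: override_on_def)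
    then show "f \<in> (\<lambda>h. override_on h a T) ` rest_configs T"
      using zero_override_in_rest_configs[OF T] f by blast
  qed (use override_on_in_configs[OF T _ a] rest_configs_def in auto)
qed

lemma sum_rest_configs_override:
  assumes "T \<subseteq> {..<N}" "a \<in> local_configs T"
  shows "(\<Sum>h\<in>rest_configs T. X (override_on h a T)) = (\<Sum>f\<in>{f \<in> configs. \<forall>k\<in>T. f k = a k}. X f)"
  using sum.reindex_bij_betw[OF bij_betw_override_on_fixed[OF assms]] .

lemma ptrace_cnj: "cnj (ptrace T W a b) = ptrace T W b a"
  unfolding ptrace_def by (simp add: mult.commute)

lemma ptrace_diag:
  assumes "T \<subseteq> {..<N}" "a \<in> local_configs T"
  shows "ptrace T W a a = complex_of_real (\<Sum>f\<in>{f \<in> configs. \<forall>k\<in>T. f k = a k}. (cmod (W f))\<^sup>2)"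
proof -
  have "ptrace T W a a = (\<Sum>h\<in>rest_configs T. complex_of_real ((cmod (W (override_on h a T)))\<^sup>2))"
    unfolding ptrace_def complex_norm_square ..
  also have "\<dots> = complex_of_real (\<Sum>f\<in>{f \<in> configs. \<forall>k\<in>T. f k = a k}. (cmod (W f))\<^sup>2)"
    unfolding of_real_sum by (rule sum_rest_configs_override[OF assms])
  finally show ?thesis .
qed

lemma digits_pair_eq_override:
  assumes T: "T \<subseteq> {..<N}" and a: "a \<in> local_configs T" and b: "b \<in> local_configs T"
    and nm: "n < tdim d (sites N)" "m < tdim d (sites N)"
    and off: "\<forall>k<N. k \<notin> T \<longrightarrow> ldigit d (sites N) k n = ldigit d (sites N) k m"
    and on: "\<forall>k\<in>T. ldigit d (sites N) k n = a k \<and> ldigit d (sites N) k m = b k"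
  shows "\<exists>h\<in>rest_configs T. override_on h a T = digits n \<and> override_on h b T = digits m"
proof -
  define h where "h = override_on (digits n) (\<lambda>_. 0) T"
  have h: "h \<in> rest_configs T"
    unfolding h_def using zero_override_in_rest_configs[OF T digits_in_configs[OF nm(1)]] .
  then have "override_on h a T \<in> configs" "override_on h b T \<in> configs"
    using override_on_in_configs[OF T _ a] override_on_in_configs[OF T _ b]
    unfolding rest_configs_def by auto
  moreover note digits_in_configs[OF nm(1)] digits_in_configs[OF nm(2)]
  ultimately have "override_on h a T = digits n" "override_on h b T = digits m"
    using on off T by (auto intro!: configs_eqI simp: h_def override_on_def digits_def)
  then show ?thesis
    using h by blast
qed

lemma reduced_sum_eq_ptrace:
  assumes T: "T \<subseteq> {..<N}" and a: "a \<in> local_configs T" and b: "b \<in> local_configs T"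
  shows "(\<Sum>(n, m)\<in>{(n, m). n < tdim d (sites N) \<and> m < tdim d (sites N)
        \<and> (\<forall>k<N. k \<notin> T \<longrightarrow> ldigit d (sites N) k n = ldigit d (sites N) k m)
        \<and> (\<forall>k\<in>T. ldigit d (sites N) k n = a k \<and> ldigit d (sites N) k m = b k)}. V n * cnj (V m))
     = ptrace T (\<lambda>f. V (encode f)) a b"
    (is "(\<Sum>(n, m)\<in>?P. _) = _")
proof -
  define g where "g h = (encode (override_on h a T), encode (override_on h b T))" for h
  have ha: "override_on h a T \<in> configs" and hb: "override_on h b T \<in> configs"
    if "h \<in> rest_configs T" for h
    using that override_on_in_configs[OF T _ a] override_on_in_configs[OF T _ b]
    unfolding rest_configs_def by auto
  have "bij_betw g (rest_configs T) ?P"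
  proof (rule bij_betw_imageI)
    show "inj_on g (rest_configs T)"
    proof (rule inj_onI)
      fix h h' assume h: "h \<in> rest_configs T" "h' \<in> rest_configs T" and "g h = g h'"
      then have "digits (encode (override_on h a T)) = digits (encode (override_on h' a T))"
        unfolding g_def by simp
      then show "h = h'"
        using h ha digits_encode override_on_inj by metis
    qed
    show "g ` rest_configs T = ?P"
    proof (intro equalityI subsetI)
      fix x assume "x \<in> g ` rest_configs T"
      then obtain h where h: "h \<in> rest_configs T" and x: "x = g h"
        by blast
      show "x \<in> ?P"
        unfolding x g_def using encode_less ldigit_encode ha[OF h] hb[OF h] T
        by (auto simp: override_on_def)
    next
      fix x assume "x \<in> ?P"
      then obtain n m where x: "x = (n, m)" and nm: "n < tdim d (sites N)" "m < tdim d (sites N)"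
        and off: "\<forall>k<N. k \<notin> T \<longrightarrow> ldigit d (sites N) k n = ldigit d (sites N) k m"
        and on: "\<forall>k\<in>T. ldigit d (sites N) k n = a k \<and> ldigit d (sites N) k m = b k"
        by blast
      obtain h where h: "h \<in> rest_configs T"
        and "override_on h a T = digits n" "override_on h b T = digits m"
        using digits_pair_eq_override[OF T a b nm off on] by blast
      then have "g h = x"
        unfolding g_def x using encode_digits nm by simp
      then show "x \<in> g ` rest_configs T"
        using h by blast
    qed
  qed
  then show ?thesis
    unfolding ptrace_def g_def by (simp add: sum.reindex_bij_betw[symmetric])
qed

definition single_label :: "nat \<Rightarrow> nat \<Rightarrow> nat \<Rightarrow> nat" where
  "single_label k a = restrict (\<lambda>_. a) {k}"

text \<open>Same mixed-radix convention as \<^const>\<open>reduced\<close>: the first listed site is the least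
  significant digit.\<close>

definition pair_label :: "nat \<Rightarrow> nat \<Rightarrow> nat \<Rightarrow> nat \<Rightarrow> nat" where
  "pair_label j i x = restrict (\<lambda>k. if k = j then x mod d j else x div d j) {j, i}"

lemma bij_betw_single_label: "bij_betw (single_label k) {..<d k} (local_configs {k})"
proof (rule bij_betw_imageI)
  show "inj_on (single_label k) {..<d k}"
    by (rule inj_onI) (metis single_label_def restrict_apply' singletonI)
  show "single_label k ` {..<d k} = local_configs {k}"
  proof (intro equalityI subsetI)
    fix g assume g: "g \<in> local_configs {k}"
    then have "g = single_label k (g k)" "g k < d k"
      unfolding single_label_def local_configs_def by (auto simp: PiE_iff extensional_def fun_eq_iff)
    then show "g \<in> single_label k ` {..<d k}"
      by blast
  qed (unfold single_label_def local_configs_def, intro image_subsetI PiE_I, auto)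
qed

lemma bij_betw_pair_label:
  assumes "j \<noteq> i" "j < N"
  shows "bij_betw (pair_label j i) {..<d j * d i} (local_configs {j, i})"
proof (rule bij_betw_imageI)
  have dj: "d j > 0"
    using assms dims_pos by (simp add: Suc_le_eq)
  have val: "pair_label j i x j = x mod d j" "pair_label j i x i = x div d j" for x
    using assms unfolding pair_label_def by auto
  show "inj_on (pair_label j i) {..<d j * d i}"
    by (rule inj_onI) (metis val div_mult_mod_eq)
  show "pair_label j i ` {..<d j * d i} = local_configs {j, i}"
  proof (intro equalityI subsetI)
    fix g assume g: "g \<in> local_configs {j, i}"
    then have gji: "g j < d j" "g i < d i"
      unfolding local_configs_def by auto
    define x where "x = g j + d j * g i"
    have "d j + d j * g i \<le> d j * d i"
      using gji(2) by (metis Suc_leI mult_Suc_right mult_le_mono2)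
    then have "x < d j * d i"
      unfolding x_def using gji(1) by linarith
    moreover have "g = pair_label j i x"
      using g gji assms unfolding x_def pair_label_def local_configs_def
      by (auto simp: PiE_iff extensional_def fun_eq_iff)
    ultimately show "g \<in> pair_label j i ` {..<d j * d i}"
      by blast
  next
    fix g assume "g \<in> pair_label j i ` {..<d j * d i}"
    then obtain x where x: "x < d j * d i" and g: "g = pair_label j i x"
      by auto
    show "g \<in> local_configs {j, i}"
      unfolding g pair_label_def local_configs_def
      by (rule PiE_I) (use dj x in \<open>auto simp: less_mult_imp_div_less mult.commute\<close>)
  qed
qed

lemma reduced_single_eq_ptrace:
  assumes k: "k < N" and ab: "a < d k" "b < d k"
  shows "reduced N d V [k] $$ (a, b)
    = ptrace {k} (\<lambda>f. V (encode f)) (single_label k a) (single_label k b)"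
proof -
  have "single_label k a \<in> local_configs {k}" "single_label k b \<in> local_configs {k}"
    using ab bij_betw_single_label[of k] by (auto simp: bij_betw_def)
  moreover have "ldigit d [k] 0 x = x" if "x < d k" for x
    using that unfolding ldigit_def by simp
  moreover have "tdim d [k] = d k"
    unfolding tdim_def by simp
  ultimately show ?thesis
    unfolding reduced_def using k ab reduced_sum_eq_ptrace[of "{k}" "single_label k a" "single_label k b" V]
    by (simp add: single_label_def)
qed

lemma reduced_pair_eq_ptrace:
  assumes ji: "j < N" "i < N" "j \<noteq> i" and xy: "x < d j * d i" "y < d j * d i"
  shows "reduced N d V [j, i] $$ (x, y)
    = ptrace {j, i} (\<lambda>f. V (encode f)) (pair_label j i x) (pair_label j i y)"
proof -
  have dj: "d j > 0"
    using ji dims_pos by (simp add: Suc_le_eq)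
  have "pair_label j i x \<in> local_configs {j, i}" "pair_label j i y \<in> local_configs {j, i}"
    using xy bij_betw_pair_label[of j i] ji by (auto simp: bij_betw_def)
  moreover have "ldigit d [j, i] 0 z = z mod d j" "ldigit d [j, i] 1 z = z div d j"
    if "z < d j * d i" for z
    using that dj unfolding ldigit_def by (simp_all add: less_mult_imp_div_less mult.commute)
  moreover have "tdim d [j, i] = d j * d i"
    unfolding tdim_def by (simp add: lessThan_Suc)
  moreover have "(\<forall>t<length [j, i]. P t) \<longleftrightarrow> P 0 \<and> P 1" for P
    by (auto simp: less_Suc_eq)
  ultimately show ?thesis
    unfolding reduced_def using ji xy reduced_sum_eq_ptrace[of "{j, i}" "pair_label j i x" "pair_label j i y" V]
    by (simp add: pair_label_def conj_ac)
qed

text \<open>Amplitudes of the same state in the product basis whose factor at site k consists of the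
  columns of U k.\<close>

definition local_rotate :: "(nat \<Rightarrow> fmat) \<Rightarrow> ((nat \<Rightarrow> nat) \<Rightarrow> complex) \<Rightarrow> (nat \<Rightarrow> nat) \<Rightarrow> complex"
  where "local_rotate U W g = (\<Sum>f\<in>configs. W f * (\<Prod>k<N. cnj (U k (f k) (g k))))"

lemma rest_configs_PiE:
  assumes T: "T \<subseteq> {..<N}"
  shows "rest_configs T = PiE {..<N} (\<lambda>k. if k \<in> T then {0} else {..<d k})"
proof (intro equalityI subsetI)
  fix x assume "x \<in> rest_configs T"
  then show "x \<in> PiE {..<N} (\<lambda>k. if k \<in> T then {0} else {..<d k})"
    using T unfolding rest_configs_def configs_def PiE_iff by auto
next
  fix x assume x: "x \<in> PiE {..<N} (\<lambda>k. if k \<in> T then {0} else {..<d k})"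
  have xk: "x k \<in> (if k \<in> T then {0} else {..<d k})" if "k < N" for k
    using x that by blast
  have "x k < d k" if "k < N" for k
    using that xk[OF that] dims_pos by (cases "k \<in> T") (auto simp: Suc_le_eq)
  moreover have "x k = 0" if "k \<in> T" for k
    using that T xk[of k] by auto
  ultimately show "x \<in> rest_configs T"
    using x unfolding rest_configs_def configs_def PiE_iff by auto
qed

lemma sum_rest_configs_local_products:
  assumes T: "T \<subseteq> {..<N}" and U: "\<forall>k<N. fm_unitary (d k) (U k)"
    and f: "f \<in> configs" and f': "f' \<in> configs"
  shows "(\<Sum>h\<in>rest_configs T. (\<Prod>k<N. cnj (U k (f k) (override_on h a T k))) *
                                (\<Prod>k<N. U k (f' k) (override_on h b T k)))
    = (if \<forall>k\<in>{..<N} - T. f k = f' k then (\<Prod>k\<in>T. cnj (U k (f k) (a k)) * U k (f' k) (b k)) else 0)"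
proof -
  define B where "B k = (if k \<in> T then {0} else {..<d k})" for k
  define psi where "psi k c = cnj (U k (f k) (if k \<in> T then a k else c)) * U k (f' k) (if k \<in> T then b k else c)"
    for k c
  have "(\<Sum>h\<in>rest_configs T. (\<Prod>k<N. cnj (U k (f k) (override_on h a T k))) *
                              (\<Prod>k<N. U k (f' k) (override_on h b T k)))
      = (\<Sum>h\<in>PiE {..<N} B. \<Prod>k<N. psi k (h k))"
    unfolding rest_configs_PiE[OF T] B_def[symmetric] psi_def override_on_def
    by (intro sum.cong refl) (simp add: prod.distrib)
  also have "\<dots> = (\<Prod>k<N. \<Sum>c\<in>B k. psi k c)"
    by (rule prod_sum_PiE[symmetric]) (auto simp: B_def)
  also have "\<dots> = (\<Prod>k\<in>T. \<Sum>c\<in>B k. psi k c) * (\<Prod>k\<in>{..<N} - T. \<Sum>c\<in>B k. psi k c)"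
    using T by (metis (no_types, lifting) finite_lessThan prod.subset_diff mult.commute)
  also have "(\<Prod>k\<in>T. \<Sum>c\<in>B k. psi k c) = (\<Prod>k\<in>T. cnj (U k (f k) (a k)) * U k (f' k) (b k))"
    by (intro prod.cong refl) (auto simp: B_def psi_def)
  also have "(\<Prod>k\<in>{..<N} - T. \<Sum>c\<in>B k. psi k c) = (\<Prod>k\<in>{..<N} - T. if f k = f' k then 1 else 0)"
  proof (intro prod.cong refl)
    fix k assume k: "k \<in> {..<N} - T"
    have "f k < d k" "f' k < d k"
      using f f' k unfolding configs_def by auto
    then have "(\<Sum>c<d k. U k (f' k) c * cnj (U k (f k) c)) = fm_one (f' k) (f k)"
      using U k fm_unitary_rows by simp
    then show "(\<Sum>c\<in>B k. psi k c) = (if f k = f' k then 1 else 0)"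
      using k unfolding B_def psi_def fm_one_def by (auto simp: mult.commute)
  qed
  also have "\<dots> = (if \<forall>k\<in>{..<N} - T. f k = f' k then 1 else 0)"
    by (rule prod_indicator) simp
  finally show ?thesis
    by simp
qed

lemma rest_configs_eq_iff:
  assumes "h \<in> rest_configs T" "h' \<in> rest_configs T"
  shows "(\<forall>k\<in>{..<N} - T. h k = h' k) \<longleftrightarrow> h' = h"
proof
  assume agree: "\<forall>k\<in>{..<N} - T. h k = h' k"
  show "h' = h"
  proof (rule configs_eqI)
    fix k assume "k < N"
    then show "h' k = h k"
      using assms agree unfolding rest_configs_def by (cases "k \<in> T") auto
  qed (use assms in \<open>auto simp: rest_configs_def\<close>)
qed simp

lemma ptrace_local_rotate:
  assumes T: "T \<subseteq> {..<N}" and U: "\<forall>k<N. fm_unitary (d k) (U k)"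
  shows "ptrace T (local_rotate U W) a b
    = (\<Sum>g\<in>local_configs T. \<Sum>g'\<in>local_configs T.
         (\<Prod>k\<in>T. cnj (U k (g k) (a k)) * U k (g' k) (b k)) * ptrace T W g g')"
proof -
  define pT where "pT f f' = (\<Prod>k\<in>T. cnj (U k (f k) (a k)) * U k (f' k) (b k))" for f f'
  have pT_override: "pT (override_on h g T) (override_on h' g' T) = pT g g'" for h h' g g'
    unfolding pT_def override_on_def by simp
  have "ptrace T (local_rotate U W) a b = (\<Sum>h\<in>rest_configs T. \<Sum>f\<in>configs. \<Sum>f'\<in>configs.
      W f * cnj (W f') * ((\<Prod>k<N. cnj (U k (f k) (override_on h a T k))) *
                          (\<Prod>k<N. U k (f' k) (override_on h b T k))))"
    unfolding ptrace_def local_rotate_def by (simp add: sum_product algebra_simps)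
  also have "\<dots> = (\<Sum>f\<in>configs. \<Sum>f'\<in>configs. W f * cnj (W f') *
      (\<Sum>h\<in>rest_configs T. (\<Prod>k<N. cnj (U k (f k) (override_on h a T k))) *
                             (\<Prod>k<N. U k (f' k) (override_on h b T k))))"
    by (simp add: sum_distrib_left sum.swap[of _ "rest_configs T"])
  also have "\<dots> = (\<Sum>f\<in>configs. \<Sum>f'\<in>configs.
      if \<forall>k\<in>{..<N} - T. f k = f' k then W f * cnj (W f') * pT f f' else 0)"
    by (intro sum.cong refl) (simp add: sum_rest_configs_local_products[OF T U] pT_def)
  also have "\<dots> = (\<Sum>h\<in>rest_configs T. \<Sum>g\<in>local_configs T. \<Sum>h'\<in>rest_configs T. \<Sum>g'\<in>local_configs T.
      if h' = h then W (override_on h g T) * cnj (W (override_on h g' T)) * pT g g' else 0)"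
    unfolding sum_configs_split[OF T]
    by (intro sum.cong refl) (simp add: rest_configs_eq_iff pT_override)
  also have "\<dots> = (\<Sum>h\<in>rest_configs T. \<Sum>g\<in>local_configs T. \<Sum>g'\<in>local_configs T.
      W (override_on h g T) * cnj (W (override_on h g' T)) * pT g g')"
    by (intro sum.cong refl sum_nested_delta) simp_all
  also have "\<dots> = (\<Sum>g\<in>local_configs T. \<Sum>g'\<in>local_configs T. pT g g' * ptrace T W g g')"
    unfolding ptrace_def by (simp add: sum_distrib_left sum.swap[of _ "rest_configs T"] algebra_simps)
  finally show ?thesis
    unfolding pT_def .
qed

lemma ptrace_local_rotate_single:
  assumes k: "k < N" and U: "\<forall>k<N. fm_unitary (d k) (U k)"
    and dec: "fm_eigendecomp (d k) (\<lambda>a b. ptrace {k} W (single_label k a) (single_label k b)) (U k) lam"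
    and ab: "a < d k" "b < d k"
  shows "ptrace {k} (local_rotate U W) (single_label k a) (single_label k b) = fm_diag lam a b"
proof -
  have Uk: "fm_unitary (d k) (U k)"
    using U k by simp
  have "ptrace {k} (local_rotate U W) (single_label k a) (single_label k b)
      = (\<Sum>x<d k. \<Sum>y<d k. cnj (U k x a) * U k y b * ptrace {k} W (single_label k x) (single_label k y))"
    using k ab bij_betw_single_label[of k]
    by (simp add: ptrace_local_rotate[OF _ U] sum.reindex_bij_betw[OF bij_betw_single_label, symmetric]
        single_label_def bij_betw_def)
  also have "\<dots> = (\<Sum>x<d k. \<Sum>y<d k. \<Sum>c<d k.
      complex_of_real (lam c) * (cnj (U k x a) * U k x c) * (cnj (U k y c) * U k y b))"
    using dec unfolding fm_eigendecomp_iff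
    by (intro sum.cong refl) (simp add: sum_distrib_left mult_ac)
  also have "\<dots> = (\<Sum>c<d k. complex_of_real (lam c) * fm_one a c * fm_one c b)"
    unfolding sum_sum_sum_factor using fm_unitary_cols[OF Uk] ab by simp
  also have "\<dots> = (\<Sum>c<d k. if c = a then fm_diag lam a b else 0)"
    by (intro sum.cong refl) (auto simp: fm_one_def fm_diag_def)
  also have "\<dots> = fm_diag lam a b"
    using ab by simp
  finally show ?thesis .
qed

lemma ptrace_local_rotate_pair:
  assumes ji: "j < N" "i < N" "j \<noteq> i" and U: "\<forall>k<N. fm_unitary (d k) (U k)"
    and xy: "x < d j * d i" "y < d j * d i"
  shows "ptrace {j, i} (local_rotate U W) (pair_label j i x) (pair_label j i y)
    = fm_mult (d j * d i) (fm_adj (fm_kron (d j) (U j) (U i)))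
        (fm_mult (d j * d i) (\<lambda>x y. ptrace {j, i} W (pair_label j i x) (pair_label j i y))
          (fm_kron (d j) (U j) (U i))) x y"
proof -
  let ?n = "d j * d i" and ?K = "fm_kron (d j) (U j) (U i)"
  note bij = bij_betw_pair_label[OF ji(3,1)]
  have val: "pair_label j i z j = z mod d j" "pair_label j i z i = z div d j" for z
    using ji unfolding pair_label_def by auto
  have "ptrace {j, i} (local_rotate U W) (pair_label j i x) (pair_label j i y)
      = (\<Sum>x'<?n. \<Sum>y'<?n. cnj (?K x' x) * (ptrace {j, i} W (pair_label j i x') (pair_label j i y') * ?K y' y))"
    using ji by (simp add: ptrace_local_rotate[OF _ U] sum.reindex_bij_betw[OF bij, symmetric] fm_kron_def val mult_ac)
  also have "\<dots> = fm_mult ?n (fm_adj ?K) (fm_mult ?n (\<lambda>x y. ptrace {j, i} W (pair_label j i x) (pair_label j i y)) ?K) x y"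
    unfolding fm_mult_def fm_adj_def by (simp add: sum_distrib_left)
  finally show ?thesis .
qed

lemma local_rotate_norm:
  assumes U: "\<forall>k<N. fm_unitary (d k) (U k)"
  shows "(\<Sum>f\<in>configs. (cmod (local_rotate U W f))\<^sup>2) = (\<Sum>f\<in>configs. (cmod (W f))\<^sup>2)"
proof -
  let ?e = "\<lambda>_::nat. undefined :: nat"
  have e: "local_configs {} = {?e}"
    unfolding local_configs_def by simp
  have "ptrace {} X ?e ?e = complex_of_real (\<Sum>f\<in>configs. (cmod (X f))\<^sup>2)" for X
    using ptrace_diag[of "{}" ?e X] e by simp
  then show ?thesis
    using ptrace_local_rotate[of "{}" U W ?e ?e] U e by (simp del: of_real_power flip: of_real_sum)
qed

definition marginal :: "((nat \<Rightarrow> nat) \<Rightarrow> complex) \<Rightarrow> nat \<Rightarrow> nat \<Rightarrow> real" where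
  "marginal W k a = (\<Sum>f\<in>{f \<in> configs. f k = a}. (cmod (W f))\<^sup>2)"

definition joint :: "((nat \<Rightarrow> nat) \<Rightarrow> complex) \<Rightarrow> nat \<Rightarrow> nat \<Rightarrow> nat \<Rightarrow> nat \<Rightarrow> real" where
  "joint W j i a b = (\<Sum>f\<in>{f \<in> configs. f j = a \<and> f i = b}. (cmod (W f))\<^sup>2)"

lemma marginal_nonneg: "marginal W k a \<ge> 0"
  unfolding marginal_def by (intro sum_nonneg) auto

lemma sum_marginal:
  assumes "k < N"
  shows "(\<Sum>a<d k. marginal W k a) = (\<Sum>f\<in>configs. (cmod (W f))\<^sup>2)"
  unfolding marginal_def
  by (rule sum.group) (use assms in \<open>auto simp: configs_def PiE_iff finite_PiE\<close>)

lemma marginal_eq_sum_joint: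
  assumes "i < N"
  shows "marginal W j a = (\<Sum>b<d i. joint W j i a b)"
proof -
  have "marginal W j a = (\<Sum>b<d i. \<Sum>f\<in>{f \<in> {f \<in> configs. f j = a}. f i = b}. (cmod (W f))\<^sup>2)"
    unfolding marginal_def
    by (rule sum.group[symmetric]) (simp, simp, use assms in \<open>auto simp: configs_def\<close>)
  then show ?thesis
    unfolding joint_def by (simp add: conj_ac)
qed

lemma marginal_eq_sum_joint':
  assumes "j < N"
  shows "marginal W i b = (\<Sum>a<d j. joint W j i a b)"
proof -
  have "marginal W i b = (\<Sum>a<d j. \<Sum>f\<in>{f \<in> {f \<in> configs. f i = b}. f j = a}. (cmod (W f))\<^sup>2)"
    unfolding marginal_def
    by (rule sum.group[symmetric]) (simp, simp, use assms in \<open>auto simp: configs_def\<close>)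
  then show ?thesis
    unfolding joint_def by (simp add: conj_ac)
qed

lemma single_label_in_local_configs: "a < d k \<Longrightarrow> single_label k a \<in> local_configs {k}"
  using bij_betw_single_label[of k] by (auto simp: bij_betw_def)

lemma pair_label_in_local_configs:
  "j < N \<Longrightarrow> j \<noteq> i \<Longrightarrow> x < d j * d i \<Longrightarrow> pair_label j i x \<in> local_configs {j, i}"
  using bij_betw_pair_label[of j i] by (auto simp: bij_betw_def)

lemma ptrace_single_diag:
  assumes "k < N" "a < d k"
  shows "ptrace {k} W (single_label k a) (single_label k a) = complex_of_real (marginal W k a)"
  using assms ptrace_diag[OF _ single_label_in_local_configs, of k a W]
  by (simp add: marginal_def single_label_def)

lemma ptrace_pair_diag:
  assumes "j < N" "i < N" "j \<noteq> i" "x < d j * d i"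
  shows "ptrace {j, i} W (pair_label j i x) (pair_label j i x)
    = complex_of_real (joint W j i (x mod d j) (x div d j))"
  using assms ptrace_diag[OF _ pair_label_in_local_configs, of j i x W]
  by (simp add: joint_def pair_label_def conj_ac)

lemma weight_site_differs:
  assumes i: "i < N" and Wn: "(\<Sum>f\<in>configs. (cmod (W f))\<^sup>2) = 1"
    and indep: "\<forall>b<d i. joint W j i a b = marginal W j a * marginal W i b" and c: "c < d i"
  shows "(\<Sum>f\<in>{f \<in> configs. f j = a \<and> f i \<noteq> c}. (cmod (W f))\<^sup>2) = marginal W j a * (1 - marginal W i c)"
proof -
  let ?A = "{f \<in> configs. f j = a \<and> f i \<noteq> c}"
  have "(\<Sum>f\<in>?A. (cmod (W f))\<^sup>2) = (\<Sum>b\<in>{..<d i} - {c}. \<Sum>f\<in>{f \<in> ?A. f i = b}. (cmod (W f))\<^sup>2)"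
    by (rule sum.group[symmetric]) (simp, simp, use i in \<open>auto simp: configs_def\<close>)
  also have "\<dots> = (\<Sum>b\<in>{..<d i} - {c}. joint W j i a b)"
    unfolding joint_def by (intro sum.cong refl) auto
  also have "\<dots> = marginal W j a * ((\<Sum>b<d i. marginal W i b) - marginal W i c)"
    using indep c by (simp add: sum_diff1 right_diff_distrib flip: sum_distrib_left)
  finally show ?thesis
    using i Wn sum_marginal[of i W] by simp
qed

text \<open>Union bound: a configuration with f 0 = a other than the one below differs from it at
  some site i \<ge> 1.\<close>

lemma amplitude_lower_bound:
  assumes N: "0 < N" and Wn: "(\<Sum>f\<in>configs. (cmod (W f))\<^sup>2) = 1"
    and prod: "\<forall>i\<in>{1..<N}. \<forall>a<d 0. \<forall>b<d i. joint W 0 i a b = marginal W 0 a * marginal W i b"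
    and j: "\<forall>i\<in>{1..<N}. j i < d i" and a: "a < d 0"
  shows "(cmod (W (restrict (\<lambda>k. if k = 0 then a else j k) {..<N})))\<^sup>2
    \<ge> marginal W 0 a * (1 - (\<Sum>i\<in>{1..<N}. 1 - marginal W i (j i)))"
proof -
  define g where "g = restrict (\<lambda>k. if k = 0 then a else j k) {..<N}"
  define S where "S = {f \<in> configs. f 0 = a}"
  define A where "A i = {f \<in> configs. f 0 = a \<and> f i \<noteq> j i}" for i
  have g: "g \<in> S"
    unfolding g_def S_def configs_def using j a N by (auto simp: PiE_iff)
  have "marginal W 0 a = (cmod (W g))\<^sup>2 + (\<Sum>f\<in>S - {g}. (cmod (W f))\<^sup>2)"
    unfolding marginal_def S_def[symmetric] using g by (simp add: S_def sum.remove)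
  also have "(\<Sum>f\<in>S - {g}. (cmod (W f))\<^sup>2) \<le> (\<Sum>i\<in>{1..<N}. \<Sum>f\<in>A i. (cmod (W f))\<^sup>2)"
  proof (rule sum_le_sum_of_cover)
    show "\<forall>i\<in>{1..<N}. A i \<subseteq> S - {g}"
    proof (intro ballI subsetI)
      fix i f assume i: "i \<in> {1..<N}" and f: "f \<in> A i"
      have "g i = j i"
        using i unfolding g_def by auto
      then show "f \<in> S - {g}"
        using f unfolding A_def S_def by auto
    qed
    show "\<forall>f\<in>S - {g}. \<exists>i\<in>{1..<N}. f \<in> A i"
    proof
      fix f assume f: "f \<in> S - {g}"
      have "f = g" if "\<forall>i\<in>{1..<N}. f i = j i"
        using f g that unfolding S_def g_def by (intro configs_eqI) (auto simp: configs_def)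
      then show "\<exists>i\<in>{1..<N}. f \<in> A i"
        using f unfolding A_def S_def by blast
    qed
  qed (simp_all add: S_def)
  also have "(\<Sum>i\<in>{1..<N}. \<Sum>f\<in>A i. (cmod (W f))\<^sup>2)
      = (\<Sum>i\<in>{1..<N}. marginal W 0 a * (1 - marginal W i (j i)))"
    unfolding A_def using weight_site_differs Wn prod a j by (intro sum.cong refl) auto
  finally show ?thesis
    unfolding g_def[symmetric] by (simp add: sum_distrib_left right_diff_distrib sum_subtractf mult.commute)
qed

text \<open>The amplitudes of the two orthogonal vectors (one for each positive weight at site 0) at
  the product configuration are large by the union bound, but Bessel's inequality limits them.\<close>

lemma marginal_defects_ge_half:
  assumes N: "0 < N" and Wn: "(\<Sum>f\<in>configs. (cmod (W f))\<^sup>2) = 1"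
    and orth: "\<forall>a<d 0. \<forall>b<d 0. a \<noteq> b \<longrightarrow> ptrace {0} W (single_label 0 a) (single_label 0 b) = 0"
    and prod: "\<forall>i\<in>{1..<N}. \<forall>a<d 0. \<forall>b<d i. joint W 0 i a b = marginal W 0 a * marginal W i b"
    and j: "\<forall>i\<in>{1..<N}. j i < d i"
    and a12: "a1 < d 0" "a2 < d 0" "a1 \<noteq> a2" "marginal W 0 a1 > 0" "marginal W 0 a2 > 0"
  shows "(\<Sum>i\<in>{1..<N}. 1 - marginal W i (j i)) \<ge> 1/2"
proof -
  define E where "E = (\<Sum>i\<in>{1..<N}. 1 - marginal W i (j i))"
  define phi where "phi a h = W (override_on h (single_label 0 a) {0})" for a h
  define g0 where "g0 = restrict (\<lambda>k. if k = 0 then 0 else j k) {..<N}"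
  have g0: "g0 \<in> rest_configs {0}"
    using j N a12(1) unfolding g0_def rest_configs_def configs_def by (auto simp: PiE_iff)
  have phi_g0: "phi a g0 = W (restrict (\<lambda>k. if k = 0 then a else j k) {..<N})" for a
    unfolding phi_def g0_def single_label_def override_on_def using N by (intro arg_cong[where f = W]) auto
  have gram: "\<forall>a\<in>{a1, a2}. \<forall>b\<in>{a1, a2}. (\<Sum>h\<in>rest_configs {0}. phi a h * cnj (phi b h))
      = (if a = b then complex_of_real (marginal W 0 a) else 0)"
    unfolding phi_def ptrace_def[symmetric] using orth ptrace_single_diag N a12(1,2) by auto
  have "(\<Sum>a\<in>{a1, a2}. (cmod (phi a g0))\<^sup>2 / marginal W 0 a) \<le> 1"
    by (rule bessel_coordinate[OF _ _ g0 _ gram]) (use a12 in auto)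
  moreover have "1 - E \<le> (cmod (phi a g0))\<^sup>2 / marginal W 0 a" if "a \<in> {a1, a2}" for a
    using amplitude_lower_bound[OF N Wn prod j, of a] that a12
    unfolding phi_g0 E_def by (auto simp: le_divide_eq mult.commute)
  ultimately have "(\<Sum>a\<in>{a1, a2}. 1 - E) \<le> 1"
    using sum_mono[of "{a1, a2}" "\<lambda>_. 1 - E" "\<lambda>a. (cmod (phi a g0))\<^sup>2 / marginal W 0 a"] by simp
  then show ?thesis
    using a12(3) unfolding E_def by simp
qed

theorem entropy_sum_gt_one:
  assumes N: "0 < N" and Wn: "(\<Sum>f\<in>configs. (cmod (W f))\<^sup>2) = 1"
    and orth: "\<forall>a<d 0. \<forall>b<d 0. a \<noteq> b \<longrightarrow> ptrace {0} W (single_label 0 a) (single_label 0 b) = 0"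
    and prod: "\<forall>i\<in>{1..<N}. \<forall>a<d 0. \<forall>b<d i. joint W 0 i a b = marginal W 0 a * marginal W i b"
    and H0: "(\<Sum>a<d 0. xlogx (marginal W 0 a)) \<noteq> 0"
  shows "(\<Sum>k<N. - (\<Sum>a<d k. xlogx (marginal W k a))) > 1"
proof -
  define Hk where "Hk k = - (\<Sum>a<d k. xlogx (marginal W k a))" for k
  have total: "(\<Sum>a<d k. marginal W k a) = 1" if "k < N" for k
    using sum_marginal[OF that] Wn by simp
  have Hk_nn: "Hk k \<ge> 0" if "k < N" for k
    unfolding Hk_def using marginal_nonneg total[OF that] member_le_sum[of _ "{..<d k}" "marginal W k"]
    by (intro entropy_nonneg) (auto intro: order.trans)
  obtain a1 a2 where a12: "a1 < d 0" "a2 < d 0" "a1 \<noteq> a2" "marginal W 0 a1 > 0" "marginal W 0 a2 > 0"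
    using two_positive_of_entropy_nonzero[of "d 0" "marginal W 0"] marginal_nonneg total[OF N] H0 by blast
  have "\<forall>i. \<exists>ji. i \<in> {1..<N} \<longrightarrow> ji < d i \<and> (\<forall>b<d i. marginal W i b \<le> marginal W i ji)"
    using exists_maximizer[of _ "marginal W _"] dims_pos by (simp add: Suc_le_eq)
  then obtain j where j: "\<forall>i\<in>{1..<N}. j i < d i \<and> (\<forall>b<d i. marginal W i b \<le> marginal W i (j i))"
    by metis
  have E: "(\<Sum>i\<in>{1..<N}. 1 - marginal W i (j i)) \<ge> 1/2"
    using j by (intro marginal_defects_ge_half[OF N Wn orth prod _ a12]) auto
  have Hi: "Hk i \<ge> min 1 (2 * (1 - marginal W i (j i)))" if "i \<in> {1..<N}" for i
    unfolding Hk_def using that j marginal_nonneg total by (intro entropy_ge_min_one_twice_defect) auto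
  have "(\<Sum>i\<in>{1..<N}. Hk i) \<ge> 1"
    using Hk_nn Hi by (intro sum_ge_one_of_min_bounds[OF _ _ E]) auto
  moreover have "Hk 0 > 0"
    using Hk_nn[OF N] H0 unfolding Hk_def by simp
  moreover have "{..<N} = insert 0 {1..<N}"
    using N by auto
  ultimately show ?thesis
    unfolding Hk_def[symmetric] by simp
qed

lemma fm_hermitian_ptrace: "fm_hermitian n (\<lambda>x y. ptrace T W (lab x) (lab y))"
  unfolding fm_hermitian_def fm_eq_def fm_adj_def by (simp add: ptrace_cnj)

text \<open>The two-site reduced state in the rotated basis is unitarily equivalent (by the Kronecker
  product of the two local rotations) to the one in the original basis, hence has the same
  spectrum.\<close>

lemma rotated_pair_eigendecomp:
  assumes ji: "j < N" "i < N" "j \<noteq> i" and U: "\<forall>k<N. fm_unitary (d k) (U k)"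
  obtains Z r where "fm_eigendecomp (d j * d i)
      (\<lambda>x y. ptrace {j, i} (local_rotate U (\<lambda>f. V (encode f))) (pair_label j i x) (pair_label j i y)) Z r"
    and "H N d V [j, i] = - (\<Sum>k<d j * d i. xlogx (r k))"
proof -
  let ?n = "d j * d i" and ?K = "fm_kron (d j) (U j) (U i)"
  define M0 where "M0 x y = ptrace {j, i} (\<lambda>f. V (encode f)) (pair_label j i x) (pair_label j i y)" for x y
  obtain Z r where dec0: "fm_eigendecomp ?n M0 Z r"
    unfolding M0_def using fm_hermitian_eigendecomp fm_hermitian_ptrace by blast
  have "reduced N d V [j, i] \<in> carrier_mat ?n ?n"
    unfolding reduced_def tdim_def by (simp add: lessThan_Suc mult.commute)
  moreover have "fm_eq ?n M0 (\<lambda>x y. reduced N d V [j, i] $$ (x, y))"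
    unfolding fm_eq_def M0_def using reduced_pair_eq_ptrace ji by simp
  ultimately have "H N d V [j, i] = - (\<Sum>k<?n. xlogx (r k))"
    unfolding H_def using vn_entropy_eigendecomp fm_eigendecomp_cong dec0 by blast
  moreover have "fm_unitary ?n ?K"
    using U ji dims_pos by (intro fm_unitary_kron) (auto simp: Suc_le_eq)
  moreover have "fm_eq ?n (\<lambda>x y. ptrace {j, i} (local_rotate U (\<lambda>f. V (encode f))) (pair_label j i x) (pair_label j i y))
      (fm_mult ?n (fm_mult ?n (fm_adj ?K) M0) (fm_adj (fm_adj ?K)))"
    unfolding fm_eq_def M0_def using ptrace_local_rotate_pair[OF ji U] by (simp add: fm_mult_assoc)
  ultimately show thesis
    using that fm_eigendecomp_conj[OF dec0] fm_unitary_adj by blast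
qed

lemma joint_eq_product_of_entropy_additive:
  assumes ji: "j < N" "i < N" "j \<noteq> i" and U: "\<forall>k<N. fm_unitary (d k) (U k)"
    and W1: "W1 = local_rotate U (\<lambda>f. V (encode f))"
    and Wn: "(\<Sum>f\<in>configs. (cmod (W1 f))\<^sup>2) = 1"
    and additive: "H N d V [j, i] = H N d V [j] + H N d V [i]"
    and Hj: "H N d V [j] = - (\<Sum>a<d j. xlogx (marginal W1 j a))"
    and Hi: "H N d V [i] = - (\<Sum>b<d i. xlogx (marginal W1 i b))"
  shows "\<forall>a<d j. \<forall>b<d i. joint W1 j i a b = marginal W1 j a * marginal W1 i b"
proof -
  let ?n = "d j * d i"
  obtain Z r where dec: "fm_eigendecomp ?n (\<lambda>x y. ptrace {j, i} W1 (pair_label j i x) (pair_label j i y)) Z r"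
    and H_pair: "H N d V [j, i] = - (\<Sum>k<?n. xlogx (r k))"
    using rotated_pair_eigendecomp[OF ji U] unfolding W1 by blast
  define T where "T k x = (cmod (Z x k))\<^sup>2" for k x
  define D where "D x = joint W1 j i (x mod d j) (x div d j)" for x
  have dj: "d j > 0"
    using ji dims_pos by (simp add: Suc_le_eq)
  have "\<forall>k<?n. r k \<ge> 0"
    using fm_eigendecomp_gram_nonneg[OF dec finite_rest_configs,
        of "\<lambda>h x. W1 (override_on h (pair_label j i x) {j, i})"]
    unfolding ptrace_def by blast
  moreover have "\<forall>x<?n. (\<Sum>k<?n. T k x) = 1" "\<forall>k<?n. (\<Sum>x<?n. T k x) = 1"
    using dec fm_unitary_norm_rows fm_unitary_norm_cols unfolding T_def fm_eigendecomp_def by auto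
  moreover have "\<forall>x<?n. D x = (\<Sum>k<?n. T k x * r k)"
  proof (intro allI impI)
    fix x assume x: "x < ?n"
    have "complex_of_real (D x) = ptrace {j, i} W1 (pair_label j i x) (pair_label j i x)"
      unfolding D_def using ptrace_pair_diag[OF ji x] by simp
    also have "\<dots> = complex_of_real (\<Sum>k<?n. T k x * r k)"
      unfolding T_def by (rule fm_eigendecomp_diag[OF dec x])
    finally show "D x = (\<Sum>k<?n. T k x * r k)"
      by (simp only: of_real_eq_iff)
  qed
  moreover have "\<forall>a<d j. marginal W1 j a = (\<Sum>b<d i. D (a + d j * b))"
    using marginal_eq_sum_joint[OF ji(2)] unfolding D_def by simp
  moreover have "\<forall>b<d i. marginal W1 i b = (\<Sum>a<d j. D (a + d j * b))"
    using marginal_eq_sum_joint'[OF ji(1)] dj unfolding D_def by simp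
  moreover have "(\<Sum>a<d j. marginal W1 j a) = 1"
    using sum_marginal[OF ji(1)] Wn by simp
  moreover have "(\<Sum>k<?n. xlogx (r k)) = (\<Sum>a<d j. xlogx (marginal W1 j a)) + (\<Sum>b<d i. xlogx (marginal W1 i b))"
    using additive Hj Hi H_pair by simp
  ultimately have "\<forall>a<d j. \<forall>b<d i. D (a + d j * b) = marginal W1 j a * marginal W1 i b"
    by (intro doubly_stochastic_entropy_additive_imp_product[of _ _ T]) (auto simp: T_def)
  then show ?thesis
    using dj unfolding D_def by simp
qed

lemma norm_encode:
  "(\<Sum>f\<in>configs. (cmod (V (encode f)))\<^sup>2) = (\<Sum>n<tdim d (sites N). (cmod (V n))\<^sup>2)"
  using sum.reindex_bij_betw[OF bij_betw_digits, of "\<lambda>f. (cmod (V (encode f)))\<^sup>2"]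
  by (simp add: encode_digits)

lemma local_eigenbasis_rotation:
  assumes Vn: "(\<Sum>n<tdim d (sites N). (cmod (V n))\<^sup>2) = 1"
  obtains U where "\<forall>k<N. fm_unitary (d k) (U k)"
    and "(\<Sum>f\<in>configs. (cmod (local_rotate U (\<lambda>f. V (encode f)) f))\<^sup>2) = 1"
    and "\<forall>k<N. \<forall>a<d k. \<forall>b<d k. a \<noteq> b \<longrightarrow>
           ptrace {k} (local_rotate U (\<lambda>f. V (encode f))) (single_label k a) (single_label k b) = 0"
    and "\<forall>k<N. H N d V [k] = - (\<Sum>a<d k. xlogx (marginal (local_rotate U (\<lambda>f. V (encode f))) k a))"
proof -
  let ?W0 = "\<lambda>f. V (encode f)"
  let ?M = "\<lambda>k a b. ptrace {k} ?W0 (single_label k a) (single_label k b)"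
  have "\<forall>k. \<exists>U lam. fm_eigendecomp (d k) (?M k) U lam"
    using fm_hermitian_eigendecomp fm_hermitian_ptrace by blast
  then obtain U lam where dec: "\<And>k. fm_eigendecomp (d k) (?M k) (U k) (lam k)"
    by metis
  define W1 where "W1 = local_rotate U ?W0"
  have U: "\<forall>k<N. fm_unitary (d k) (U k)"
    using dec unfolding fm_eigendecomp_def by blast
  have diag: "ptrace {k} W1 (single_label k a) (single_label k b) = fm_diag (lam k) a b"
    if "k < N" "a < d k" "b < d k" for k a b
    unfolding W1_def using ptrace_local_rotate_single[OF _ U dec] that by blast
  have marg: "marginal W1 k a = lam k a" if "k < N" "a < d k" for k a
    using diag[OF that that(2)] ptrace_single_diag[OF that] by (simp add: fm_diag_def)
  have "H N d V [k] = - (\<Sum>a<d k. xlogx (marginal W1 k a))" if k: "k < N" for k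
  proof -
    have "reduced N d V [k] \<in> carrier_mat (d k) (d k)"
      unfolding reduced_def tdim_def by simp
    moreover have "fm_eq (d k) (?M k) (\<lambda>a b. reduced N d V [k] $$ (a, b))"
      unfolding fm_eq_def using reduced_single_eq_ptrace k by simp
    ultimately have "H N d V [k] = - (\<Sum>a<d k. xlogx (lam k a))"
      unfolding H_def using vn_entropy_eigendecomp fm_eigendecomp_cong dec by blast
    then show ?thesis
      using marg k by simp
  qed
  moreover have "(\<Sum>f\<in>configs. (cmod (W1 f))\<^sup>2) = 1"
    unfolding W1_def using local_rotate_norm[OF U] norm_encode Vn by simp
  ultimately show thesis
    using that U diag unfolding W1_def by (simp add: fm_diag_def)
qed

end

theorem theorem1:
  fixes N :: nat and d :: "nat \<Rightarrow> nat" and V :: "nat \<Rightarrow> complex"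
  assumes "N \<ge> 1"
    and "\<forall>k<N. d k \<ge> 1"
    and "(\<Sum>n<tdim d (sites N). (cmod (V n))\<^sup>2) = 1"
    and "H N d V [0] \<noteq> 0"
    and "\<forall>i. 1 \<le> i \<and> i < N \<longrightarrow> mutual_info N d V 0 i = 0"
  shows "(\<Sum>i<N. H N d V [i]) > 1"
proof -
  interpret tensor_sites N d
    using assms(2) by unfold_locales
  obtain U where U: "\<forall>k<N. fm_unitary (d k) (U k)"
    and norm: "(\<Sum>f\<in>configs. (cmod (local_rotate U (\<lambda>f. V (encode f)) f))\<^sup>2) = 1"
    and orth: "\<forall>k<N. \<forall>a<d k. \<forall>b<d k. a \<noteq> b \<longrightarrow>
      ptrace {k} (local_rotate U (\<lambda>f. V (encode f))) (single_label k a) (single_label k b) = 0"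
    and H: "\<forall>k<N. H N d V [k] = - (\<Sum>a<d k. xlogx (marginal (local_rotate U (\<lambda>f. V (encode f))) k a))"
    using local_eigenbasis_rotation[OF assms(3)] by blast
  have N: "0 < N"
    using assms(1) by simp
  have "\<forall>i\<in>{1..<N}. \<forall>a<d 0. \<forall>b<d i. joint (local_rotate U (\<lambda>f. V (encode f))) 0 i a b
      = marginal (local_rotate U (\<lambda>f. V (encode f))) 0 a * marginal (local_rotate U (\<lambda>f. V (encode f))) i b"
    using assms(5) H N by (intro ballI joint_eq_product_of_entropy_additive[OF _ _ _ U refl norm])
      (auto simp: mutual_info_def)
  then have "(\<Sum>k<N. - (\<Sum>a<d k. xlogx (marginal (local_rotate U (\<lambda>f. V (encode f))) k a))) > 1"
    using entropy_sum_gt_one[OF N norm] orth assms(4) H N by auto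
  then show ?thesis
    using H by simp
qed

end
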